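(* Let $\pi$ be a positive continuous probability density on $\mathbb{R}$ and $q:\mathbb{R}^2\to[0,\infty)$ a bounded continuous function with $q(x,\cdot)$ a probability density for each $x$ and, for some $s>0$, $q(x,x+u)=0$ whenever $|u|>s$. Let $a>0$ and let $P=R+T$ be the Metropolis–Hastings operator on $L^2(\pi)$. Then for every $n\ge1$ there exists a compact operator $K_n$ on $L^2(\pi)$ such that $$P^n=K_n+R_a^n+(R_{a^c}+T_{a^c})^n.$$
   Context: $L^2(\pi)$ is the $L^2$ space of the probability measure $\pi(y)dy$. Set $t(x,y):=\min(q(x,y),\pi(y)q(y,x)/\pi(x))$, $r(x):=1-\int_{\mathbb{R}}t(x,y)\,dy$, $(Tf)(x):=\int_{\mathbb{R}}f(y)t(x,y)\,dy$, $(Rf)(x):=r(x)f(x)$, and $P:=R+T$. For a bounded operator $U$ on $L^2(\pi)$ define $U_af:=1_{[-a,a]}\cdot Uf$ and $U_{a^c}f:=1_{\mathbb{R}\setminus[-a,a]}\cdot Uf$. *)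

theory Defs
  imports "HOL-Analysis.Analysis"
begin

definition mh_t :: "(real \<Rightarrow> real) \<Rightarrow> (real \<Rightarrow> real \<Rightarrow> real) \<Rightarrow> real \<Rightarrow> real \<Rightarrow> real" where
  "mh_t \<pi> q x y = min (q x y) (\<pi> y * q y x / \<pi> x)"

definition mh_r :: "(real \<Rightarrow> real) \<Rightarrow> (real \<Rightarrow> real \<Rightarrow> real) \<Rightarrow> real \<Rightarrow> real" where
  "mh_r \<pi> q x = 1 - (LINT y|lborel. mh_t \<pi> q x y)"

definition mh_T :: "(real \<Rightarrow> real) \<Rightarrow> (real \<Rightarrow> real \<Rightarrow> real) \<Rightarrow> (real \<Rightarrow> real) \<Rightarrow> real \<Rightarrow> real" where
  "mh_T \<pi> q f x = (LINT y|lborel. f y * mh_t \<pi> q x y)"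

definition mh_R :: "(real \<Rightarrow> real) \<Rightarrow> (real \<Rightarrow> real \<Rightarrow> real) \<Rightarrow> (real \<Rightarrow> real) \<Rightarrow> real \<Rightarrow> real" where
  "mh_R \<pi> q f x = mh_r \<pi> q x * f x"

definition mh_P :: "(real \<Rightarrow> real) \<Rightarrow> (real \<Rightarrow> real \<Rightarrow> real) \<Rightarrow> (real \<Rightarrow> real) \<Rightarrow> real \<Rightarrow> real" where
  "mh_P \<pi> q f x = mh_R \<pi> q f x + mh_T \<pi> q f x"

definition restr_in :: "real \<Rightarrow> ((real \<Rightarrow> real) \<Rightarrow> real \<Rightarrow> real) \<Rightarrow> (real \<Rightarrow> real) \<Rightarrow> real \<Rightarrow> real" where
  "restr_in a U f x = indicator {-a..a} x * U f x"

definition restr_out :: "real \<Rightarrow> ((real \<Rightarrow> real) \<Rightarrow> real \<Rightarrow> real) \<Rightarrow> (real \<Rightarrow> real) \<Rightarrow> real \<Rightarrow> real" where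
  "restr_out a U f x = indicator (UNIV - {-a..a}) x * U f x"

definition piM :: "(real \<Rightarrow> real) \<Rightarrow> real measure" where
  "piM \<pi> = density lborel (\<lambda>x. ennreal (\<pi> x))"

definition L2 :: "(real \<Rightarrow> real) \<Rightarrow> (real \<Rightarrow> real) \<Rightarrow> bool" where
  "L2 \<pi> f \<longleftrightarrow> f \<in> borel_measurable lborel \<and> integrable (piM \<pi>) (\<lambda>x. (f x)\<^sup>2)"

definition L2norm :: "(real \<Rightarrow> real) \<Rightarrow> (real \<Rightarrow> real) \<Rightarrow> real" where
  "L2norm \<pi> f = sqrt (LINT x|piM \<pi>. (f x)\<^sup>2)"

definition bounded_op_L2 :: "(real \<Rightarrow> real) \<Rightarrow> ((real \<Rightarrow> real) \<Rightarrow> real \<Rightarrow> real) \<Rightarrow> bool" where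
  "bounded_op_L2 \<pi> K \<longleftrightarrow>
     (\<forall>f. L2 \<pi> f \<longrightarrow> L2 \<pi> (K f)) \<and>
     (\<forall>f g c. L2 \<pi> f \<and> L2 \<pi> g \<longrightarrow>
        (AE x in piM \<pi>. K (\<lambda>y. c * f y + g y) x = c * K f x + K g x)) \<and>
     (\<exists>C. \<forall>f. L2 \<pi> f \<longrightarrow> L2norm \<pi> (K f) \<le> C * L2norm \<pi> f)"

text \<open>Compact operator: bounded linear, and the image of every bounded sequence has an
  L^2-Cauchy (hence, by completeness of L^2, convergent) subsequence.\<close>
definition compact_op_L2 :: "(real \<Rightarrow> real) \<Rightarrow> ((real \<Rightarrow> real) \<Rightarrow> real \<Rightarrow> real) \<Rightarrow> bool" where
  "compact_op_L2 \<pi> K \<longleftrightarrow> bounded_op_L2 \<pi> K \<and>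
     (\<forall>(F :: nat \<Rightarrow> real \<Rightarrow> real) (B::real). (\<forall>k. L2 \<pi> (F k) \<and> L2norm \<pi> (F k) \<le> B) \<longrightarrow>
        (\<exists>r. strict_mono r \<and>
           (\<forall>e::real>0. \<exists>N::nat. \<forall>m\<ge>N. \<forall>k\<ge>N. L2norm \<pi> (\<lambda>x. K (F (r m)) x - K (F (r k)) x) < e)))"

end

(*
  Split P = A + T_in + S with A = R_a, T_in = T_a and S = R_{a^c} + T_{a^c}.  Since the
  proposal has range s, T_in only reads its input on [-a-s, a+s]: it is a kernel operator
  whose continuous kernel lives on a compact box, where pi is bounded below.  Hence it maps
  bounded sets of L2(pi) to uniformly bounded, equicontinuous families, and Arzela-Ascoli
  followed by dominated convergence shows that it is compact.  For the same reason
  S A = 1_{a^c} T 1_[-a,a] R is compact, while A S = 0 because the supports are disjoint.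
  Writing P^n = A^n + K_n + S^n and multiplying by P gives
  K_{n+1} = A K_n + T_in P^n + (S A) A^{n-1} + S K_n, compact by induction from K_1 = T_in.
*)
theory Submission
  imports Defs "HOL-Library.Diagonal_Subsequence"
begin

section \<open>Square-integrable functions\<close>

definition square_integrable :: "'a measure \<Rightarrow> ('a \<Rightarrow> real) \<Rightarrow> bool" where
  "square_integrable M f \<longleftrightarrow> f \<in> borel_measurable M \<and> integrable M (\<lambda>x. (f x)\<^sup>2)"

definition L2_norm :: "'a measure \<Rightarrow> ('a \<Rightarrow> real) \<Rightarrow> real" where
  "L2_norm M f = sqrt (\<integral>x. (f x)\<^sup>2 \<partial>M)"

lemma quadratic_nonneg_imp_discriminant_le:
  fixes A B C :: real
  assumes nonneg: "\<And>t. 0 \<le> t\<^sup>2 * A + 2 * t * C + B" and "A \<ge> 0"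
  shows "C\<^sup>2 \<le> A * B"
proof (cases "A = 0")
  case True
  show ?thesis
  proof (rule ccontr)
    assume "\<not> ?thesis"
    then have "C \<noteq> 0" using True by simp
    have "0 \<le> (-(\<bar>B\<bar>+1)/(2*C))\<^sup>2 * A + 2 * (-(\<bar>B\<bar>+1)/(2*C)) * C + B" by (rule nonneg)
    also have "\<dots> = -(\<bar>B\<bar>+1) + B" using True \<open>C \<noteq> 0\<close> by (simp add: field_simps)
    finally show False by linarith
  qed
next
  case False
  then have A: "A > 0" using \<open>A \<ge> 0\<close> by simp
  have "0 \<le> (-C/A)\<^sup>2 * A + 2 * (-C/A) * C + B" by (rule nonneg)
  also have "\<dots> = B - C\<^sup>2/A" using A by (simp add: field_simps power2_eq_square)
  finally show ?thesis using A by (simp add: field_simps mult.commute)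
qed

lemma square_integrable_measurable: "square_integrable M f \<Longrightarrow> f \<in> borel_measurable M"
  by (simp add: square_integrable_def)

lemma square_integrable_integrable_mult:
  assumes "square_integrable M f" "square_integrable M g"
  shows "integrable M (\<lambda>x. f x * g x)"
proof (rule Bochner_Integration.integrable_bound[where f="\<lambda>x. (f x)\<^sup>2 + (g x)\<^sup>2"])
  show "integrable M (\<lambda>x. (f x)\<^sup>2 + (g x)\<^sup>2)" using assms by (auto simp: square_integrable_def)
  show "(\<lambda>x. f x * g x) \<in> borel_measurable M" using assms by (auto simp: square_integrable_def)
  have "\<bar>f x * g x\<bar> \<le> (f x)\<^sup>2 + (g x)\<^sup>2" for x
  proof -
    have "2 * \<bar>f x\<bar> * \<bar>g x\<bar> \<le> (f x)\<^sup>2 + (g x)\<^sup>2"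
      using sum_squares_bound[of "\<bar>f x\<bar>" "\<bar>g x\<bar>"] by (simp add: power2_abs)
    then show ?thesis using abs_ge_zero[of "f x * g x"] by (simp only: abs_mult)
  qed
  then show "AE x in M. norm (f x * g x) \<le> norm ((f x)\<^sup>2 + (g x)\<^sup>2)" by simp
qed

lemma square_integrable_lincomb:
  assumes "square_integrable M f" "square_integrable M g"
  shows "square_integrable M (\<lambda>x. c * f x + g x)"
proof -
  have "(\<lambda>x. (c * f x + g x)\<^sup>2) = (\<lambda>x. c\<^sup>2 * (f x)\<^sup>2 + 2 * c * (f x * g x) + (g x)\<^sup>2)"
    by (auto simp: power2_eq_square algebra_simps)
  then show ?thesis
    using assms square_integrable_integrable_mult[OF assms] by (auto simp: square_integrable_def)
qed

lemma square_integrable_zero: "square_integrable M (\<lambda>x. 0)"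
  by (simp add: square_integrable_def)

lemma square_integrable_add: "square_integrable M f \<Longrightarrow> square_integrable M g \<Longrightarrow> square_integrable M (\<lambda>x. f x + g x)"
  using square_integrable_lincomb[of M f g 1] by simp

lemma square_integrable_cmult: "square_integrable M f \<Longrightarrow> square_integrable M (\<lambda>x. c * f x)"
  using square_integrable_lincomb[OF _ square_integrable_zero] by simp

lemma square_integrable_diff: "square_integrable M f \<Longrightarrow> square_integrable M g \<Longrightarrow> square_integrable M (\<lambda>x. f x - g x)"
  using square_integrable_lincomb[of M g f "-1"] by simp

lemma L2_norm_nonneg: "L2_norm M f \<ge> 0"
  by (simp add: L2_norm_def)

lemma L2_norm_power2: "L2_norm M f ^ 2 = (\<integral>x. (f x)\<^sup>2 \<partial>M)"
  by (simp add: L2_norm_def)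

lemma Cauchy_Schwarz_integral:
  assumes "square_integrable M f" "square_integrable M g"
  shows "(\<integral>x. f x * g x \<partial>M)\<^sup>2 \<le> (\<integral>x. (f x)\<^sup>2 \<partial>M) * (\<integral>x. (g x)\<^sup>2 \<partial>M)"
proof (rule quadratic_nonneg_imp_discriminant_le)
  fix t :: real
  have "0 \<le> (\<integral>x. (t * f x + g x)\<^sup>2 \<partial>M)" by simp
  also have "\<dots> = (\<integral>x. t\<^sup>2 * (f x)\<^sup>2 + 2 * t * (f x * g x) + (g x)\<^sup>2 \<partial>M)"
    by (rule Bochner_Integration.integral_cong) (auto simp: power2_eq_square algebra_simps)
  also have "\<dots> = t\<^sup>2 * (\<integral>x. (f x)\<^sup>2 \<partial>M) + 2 * t * (\<integral>x. f x * g x \<partial>M) + (\<integral>x. (g x)\<^sup>2 \<partial>M)"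
    using assms square_integrable_integrable_mult[OF assms] by (simp add: square_integrable_def)
  finally show "0 \<le> t\<^sup>2 * (\<integral>x. (f x)\<^sup>2 \<partial>M) + 2 * t * (\<integral>x. f x * g x \<partial>M) + (\<integral>x. (g x)\<^sup>2 \<partial>M)" .
qed simp

lemma L2_norm_triangle:
  assumes "square_integrable M f" "square_integrable M g"
  shows "L2_norm M (\<lambda>x. f x + g x) \<le> L2_norm M f + L2_norm M g"
proof -
  have "(\<integral>x. (f x + g x)\<^sup>2 \<partial>M) = (\<integral>x. (f x)\<^sup>2 + 2 * (f x * g x) + (g x)\<^sup>2 \<partial>M)"
    by (rule Bochner_Integration.integral_cong) (auto simp: power2_eq_square algebra_simps)
  also have "\<dots> = (\<integral>x. (f x)\<^sup>2 \<partial>M) + 2 * (\<integral>x. f x * g x \<partial>M) + (\<integral>x. (g x)\<^sup>2 \<partial>M)"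
    using assms square_integrable_integrable_mult[OF assms] by (simp add: square_integrable_def)
  also have "\<dots> \<le> (L2_norm M f)\<^sup>2 + 2 * (L2_norm M f * L2_norm M g) + (L2_norm M g)\<^sup>2"
    using Cauchy_Schwarz_integral[OF assms] real_sqrt_le_mono
    by (fastforce simp: L2_norm_def real_sqrt_mult[symmetric] abs_le_iff)
  also have "\<dots> = (L2_norm M f + L2_norm M g)\<^sup>2" by (simp add: power2_eq_square algebra_simps)
  finally have "(L2_norm M (\<lambda>x. f x + g x))\<^sup>2 \<le> (L2_norm M f + L2_norm M g)\<^sup>2" by (simp add: L2_norm_power2)
  then show ?thesis by (meson L2_norm_nonneg add_nonneg_nonneg power2_le_imp_le)
qed

lemma L2_norm_cmult: "L2_norm M (\<lambda>x. c * f x) = \<bar>c\<bar> * L2_norm M f"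
  by (simp add: L2_norm_def power_mult_distrib real_sqrt_mult)

lemma L2_norm_cong_AE:
  assumes "f \<in> borel_measurable M" "g \<in> borel_measurable M" "AE x in M. f x = g x"
  shows "L2_norm M f = L2_norm M g"
proof -
  have "(\<integral>x. (f x)\<^sup>2 \<partial>M) = (\<integral>x. (g x)\<^sup>2 \<partial>M)"
    using assms by (intro integral_cong_AE) auto
  then show ?thesis by (simp add: L2_norm_def)
qed

lemma L2_norm_eq_0_imp_AE_0:
  assumes "square_integrable M f" "L2_norm M f = 0"
  shows "AE x in M. f x = 0"
proof -
  have "AE x in M. (f x)\<^sup>2 = 0"
    using assms integral_nonneg_eq_0_iff_AE[of M "\<lambda>x. (f x)\<^sup>2"] by (simp add: L2_norm_def square_integrable_def)
  then show ?thesis by simp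
qed

lemma square_integrable_mult_bounded:
  assumes "square_integrable M f" "h \<in> borel_measurable M" "\<And>x. \<bar>h x\<bar> \<le> B"
  shows "square_integrable M (\<lambda>x. h x * f x)" "L2_norm M (\<lambda>x. h x * f x) \<le> B * L2_norm M f"
proof -
  have B: "B \<ge> 0" using assms(3) by (meson abs_ge_zero order_trans)
  have le: "(h x * f x)\<^sup>2 \<le> B\<^sup>2 * (f x)\<^sup>2" for x
    using power_mono[OF assms(3)[of x] abs_ge_zero, of 2] by (simp add: power_mult_distrib mult_right_mono)
  have i: "integrable M (\<lambda>x. B\<^sup>2 * (f x)\<^sup>2)" using assms(1) by (simp add: square_integrable_def)
  have m: "(\<lambda>x. h x * f x) \<in> borel_measurable M" using assms by (auto simp: square_integrable_def)
  have i2: "integrable M (\<lambda>x. (h x * f x)\<^sup>2)"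
    by (rule Bochner_Integration.integrable_bound[OF i]) (use m le in auto)
  then show "square_integrable M (\<lambda>x. h x * f x)" using m by (simp add: square_integrable_def)
  have "(\<integral>x. (h x * f x)\<^sup>2 \<partial>M) \<le> (\<integral>x. B\<^sup>2 * (f x)\<^sup>2 \<partial>M)"
    by (rule integral_mono[OF i2 i le])
  then have "(L2_norm M (\<lambda>x. h x * f x))\<^sup>2 \<le> (B * L2_norm M f)\<^sup>2"
    by (simp add: L2_norm_power2 power_mult_distrib)
  then show "L2_norm M (\<lambda>x. h x * f x) \<le> B * L2_norm M f"
    using B L2_norm_nonneg by (meson mult_nonneg_nonneg power2_le_imp_le)
qed

section \<open>Bounded and compact operators on L2(\<pi>)\<close>

lemma measurable_piM [simp]: "measurable (piM \<pi>) N = measurable lborel N"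
  unfolding piM_def by (rule measurable_cong_sets) auto

lemma L2_iff_square_integrable: "L2 \<pi> f \<longleftrightarrow> square_integrable (piM \<pi>) f"
  by (simp add: L2_def square_integrable_def)

lemma L2norm_eq_L2_norm: "L2norm \<pi> f = L2_norm (piM \<pi>) f"
  by (simp add: L2norm_def L2_norm_def)

lemma bounded_op_L2I:
  assumes "\<And>f. square_integrable (piM \<pi>) f \<Longrightarrow> square_integrable (piM \<pi>) (K f)"
    and "\<And>f g c. square_integrable (piM \<pi>) f \<Longrightarrow> square_integrable (piM \<pi>) g \<Longrightarrow>
        AE x in piM \<pi>. K (\<lambda>y. c * f y + g y) x = c * K f x + K g x"
    and "\<And>f. square_integrable (piM \<pi>) f \<Longrightarrow> L2_norm (piM \<pi>) (K f) \<le> C * L2_norm (piM \<pi>) f"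
  shows "bounded_op_L2 \<pi> K"
  unfolding bounded_op_L2_def L2_iff_square_integrable L2norm_eq_L2_norm using assms by blast

lemma bounded_op_L2_square_integrable:
  "bounded_op_L2 \<pi> K \<Longrightarrow> square_integrable (piM \<pi>) f \<Longrightarrow> square_integrable (piM \<pi>) (K f)"
  unfolding bounded_op_L2_def L2_iff_square_integrable by blast

lemma bounded_op_L2_linear_AE:
  "bounded_op_L2 \<pi> K \<Longrightarrow> square_integrable (piM \<pi>) f \<Longrightarrow> square_integrable (piM \<pi>) g \<Longrightarrow>
    AE x in piM \<pi>. K (\<lambda>y. c * f y + g y) x = c * K f x + K g x"
  unfolding bounded_op_L2_def L2_iff_square_integrable by blast

lemma bounded_op_L2_normE:
  assumes "bounded_op_L2 \<pi> K"
  obtains C where "C > 0"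
    "\<And>f. square_integrable (piM \<pi>) f \<Longrightarrow> L2_norm (piM \<pi>) (K f) \<le> C * L2_norm (piM \<pi>) f"
proof -
  obtain C where C: "\<And>f. square_integrable (piM \<pi>) f \<Longrightarrow> L2_norm (piM \<pi>) (K f) \<le> C * L2_norm (piM \<pi>) f"
    using assms unfolding bounded_op_L2_def L2_iff_square_integrable L2norm_eq_L2_norm by blast
  have "C * L2_norm (piM \<pi>) f \<le> max C 1 * L2_norm (piM \<pi>) f" for f
    by (rule mult_right_mono) (auto simp: L2_norm_nonneg)
  with C show ?thesis by (intro that[of "max C 1"]) (auto intro: order_trans)
qed

lemma bounded_op_L2_diff_AE:
  assumes K: "bounded_op_L2 \<pi> K" and f: "square_integrable (piM \<pi>) f" and g: "square_integrable (piM \<pi>) g"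
  shows "AE x in piM \<pi>. K (\<lambda>y. f y - g y) x = K f x - K g x"
  using bounded_op_L2_linear_AE[OF K g f, of "-1"] by simp

lemma bounded_op_L2_LipschitzE:
  assumes K: "bounded_op_L2 \<pi> K"
  obtains C where "C > 0" "\<And>f g. square_integrable (piM \<pi>) f \<Longrightarrow> square_integrable (piM \<pi>) g \<Longrightarrow>
    L2_norm (piM \<pi>) (\<lambda>x. K f x - K g x) \<le> C * L2_norm (piM \<pi>) (\<lambda>x. f x - g x)"
proof -
  obtain C where "C > 0" and C: "\<And>f. square_integrable (piM \<pi>) f \<Longrightarrow> L2_norm (piM \<pi>) (K f) \<le> C * L2_norm (piM \<pi>) f"
    using bounded_op_L2_normE[OF K] by blast
  have "L2_norm (piM \<pi>) (\<lambda>x. K f x - K g x) \<le> C * L2_norm (piM \<pi>) (\<lambda>x. f x - g x)"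
    if f: "square_integrable (piM \<pi>) f" and g: "square_integrable (piM \<pi>) g" for f g
  proof -
    have "L2_norm (piM \<pi>) (\<lambda>x. K f x - K g x) = L2_norm (piM \<pi>) (K (\<lambda>y. f y - g y))"
      using bounded_op_L2_diff_AE[OF K f g]
      by (intro L2_norm_cong_AE square_integrable_measurable square_integrable_diff
          bounded_op_L2_square_integrable[OF K] f g) auto
    also have "\<dots> \<le> C * L2_norm (piM \<pi>) (\<lambda>x. f x - g x)"
      by (intro C square_integrable_diff f g)
    finally show ?thesis .
  qed
  with \<open>C > 0\<close> show ?thesis by (rule that)
qed

lemma bounded_op_L2_AE_cong:
  assumes K: "bounded_op_L2 \<pi> K" and f: "square_integrable (piM \<pi>) f" and g: "square_integrable (piM \<pi>) g"
    and fg: "AE x in piM \<pi>. f x = g x"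
  shows "AE x in piM \<pi>. K f x = K g x"
proof -
  obtain C where "C > 0" and C: "\<And>f g. square_integrable (piM \<pi>) f \<Longrightarrow> square_integrable (piM \<pi>) g \<Longrightarrow>
    L2_norm (piM \<pi>) (\<lambda>x. K f x - K g x) \<le> C * L2_norm (piM \<pi>) (\<lambda>x. f x - g x)"
    using bounded_op_L2_LipschitzE[OF K] by blast
  have "(\<lambda>x. f x - g x) \<in> borel_measurable (piM \<pi>)"
    by (intro square_integrable_measurable square_integrable_diff f g)
  then have "L2_norm (piM \<pi>) (\<lambda>x. f x - g x) = L2_norm (piM \<pi>) (\<lambda>x. 0)"
    by (rule L2_norm_cong_AE) (use fg in auto)
  then have "L2_norm (piM \<pi>) (\<lambda>x. f x - g x) = 0" by (simp add: L2_norm_def)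
  then have "L2_norm (piM \<pi>) (\<lambda>x. K f x - K g x) = 0"
    using C[OF f g] L2_norm_nonneg[of "piM \<pi>" "\<lambda>x. K f x - K g x"] by simp
  then have "AE x in piM \<pi>. K f x - K g x = 0"
    by (intro L2_norm_eq_0_imp_AE_0 square_integrable_diff bounded_op_L2_square_integrable[OF K] f g)
  then show ?thesis by simp
qed

lemma bounded_op_L2_comp:
  assumes K: "bounded_op_L2 \<pi> K" and B: "bounded_op_L2 \<pi> B"
  shows "bounded_op_L2 \<pi> (\<lambda>f. K (B f))"
proof -
  obtain C1 where "C1 > 0" and C1: "\<And>f. square_integrable (piM \<pi>) f \<Longrightarrow> L2_norm (piM \<pi>) (K f) \<le> C1 * L2_norm (piM \<pi>) f"
    using bounded_op_L2_normE[OF K] by blast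
  obtain C2 where C2: "\<And>f. square_integrable (piM \<pi>) f \<Longrightarrow> L2_norm (piM \<pi>) (B f) \<le> C2 * L2_norm (piM \<pi>) f"
    using bounded_op_L2_normE[OF B] by blast
  note K_sq = bounded_op_L2_square_integrable[OF K] and B_sq = bounded_op_L2_square_integrable[OF B]
  show ?thesis
  proof (rule bounded_op_L2I[where C="C1 * C2"])
    fix f assume f: "square_integrable (piM \<pi>) f"
    show "square_integrable (piM \<pi>) (K (B f))" by (intro K_sq B_sq f)
    have "L2_norm (piM \<pi>) (K (B f)) \<le> C1 * L2_norm (piM \<pi>) (B f)" by (intro C1 B_sq f)
    also have "\<dots> \<le> C1 * (C2 * L2_norm (piM \<pi>) f)" using C2[OF f] \<open>C1 > 0\<close> by simp
    finally show "L2_norm (piM \<pi>) (K (B f)) \<le> C1 * C2 * L2_norm (piM \<pi>) f" by simp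
  next
    fix f g c assume f: "square_integrable (piM \<pi>) f" and g: "square_integrable (piM \<pi>) g"
    have "AE x in piM \<pi>. K (B (\<lambda>y. c * f y + g y)) x = K (\<lambda>y. c * B f y + B g y) x"
      by (intro bounded_op_L2_AE_cong[OF K] B_sq square_integrable_lincomb f g bounded_op_L2_linear_AE[OF B])
    moreover have "AE x in piM \<pi>. K (\<lambda>y. c * B f y + B g y) x = c * K (B f) x + K (B g) x"
      by (intro bounded_op_L2_linear_AE[OF K] B_sq f g)
    ultimately show "AE x in piM \<pi>. K (B (\<lambda>y. c * f y + g y)) x = c * K (B f) x + K (B g) x"
      by eventually_elim simp
  qed
qed

lemma bounded_op_L2_lincomb:
  assumes K1: "bounded_op_L2 \<pi> K1" and K2: "bounded_op_L2 \<pi> K2"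
  shows "bounded_op_L2 \<pi> (\<lambda>f x. K1 f x + d * K2 f x)"
proof -
  obtain C1 where C1: "\<And>f. square_integrable (piM \<pi>) f \<Longrightarrow> L2_norm (piM \<pi>) (K1 f) \<le> C1 * L2_norm (piM \<pi>) f"
    using bounded_op_L2_normE[OF K1] by blast
  obtain C2 where C2: "\<And>f. square_integrable (piM \<pi>) f \<Longrightarrow> L2_norm (piM \<pi>) (K2 f) \<le> C2 * L2_norm (piM \<pi>) f"
    using bounded_op_L2_normE[OF K2] by blast
  show ?thesis
  proof (rule bounded_op_L2I[where C="C1 + \<bar>d\<bar> * C2"])
    fix f assume f: "square_integrable (piM \<pi>) f"
    have Kf: "square_integrable (piM \<pi>) (K1 f)" "square_integrable (piM \<pi>) (K2 f)"
      using f by (auto intro: bounded_op_L2_square_integrable[OF K1] bounded_op_L2_square_integrable[OF K2])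
    then show "square_integrable (piM \<pi>) (\<lambda>x. K1 f x + d * K2 f x)"
      by (intro square_integrable_add square_integrable_cmult)
    have "L2_norm (piM \<pi>) (\<lambda>x. K1 f x + d * K2 f x) \<le> L2_norm (piM \<pi>) (K1 f) + \<bar>d\<bar> * L2_norm (piM \<pi>) (K2 f)"
      using L2_norm_triangle[OF Kf(1) square_integrable_cmult[OF Kf(2)]] by (simp add: L2_norm_cmult)
    also have "\<dots> \<le> C1 * L2_norm (piM \<pi>) f + \<bar>d\<bar> * (C2 * L2_norm (piM \<pi>) f)"
      using C1[OF f] C2[OF f] by (intro add_mono mult_left_mono) auto
    finally show "L2_norm (piM \<pi>) (\<lambda>x. K1 f x + d * K2 f x) \<le> (C1 + \<bar>d\<bar> * C2) * L2_norm (piM \<pi>) f"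
      by (simp add: algebra_simps)
  next
    fix f g c assume f: "square_integrable (piM \<pi>) f" and g: "square_integrable (piM \<pi>) g"
    from bounded_op_L2_linear_AE[OF K1 f g, of c] bounded_op_L2_linear_AE[OF K2 f g, of c]
    show "AE x in piM \<pi>. K1 (\<lambda>y. c * f y + g y) x + d * K2 (\<lambda>y. c * f y + g y) x =
        c * (K1 f x + d * K2 f x) + (K1 g x + d * K2 g x)"
      by eventually_elim (simp add: algebra_simps)
  qed
qed

lemma bounded_op_L2_add:
  "bounded_op_L2 \<pi> K1 \<Longrightarrow> bounded_op_L2 \<pi> K2 \<Longrightarrow> bounded_op_L2 \<pi> (\<lambda>f x. K1 f x + K2 f x)"
  using bounded_op_L2_lincomb[of \<pi> K1 K2 1] by simp

lemma bounded_op_L2_diff: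
  "bounded_op_L2 \<pi> K1 \<Longrightarrow> bounded_op_L2 \<pi> K2 \<Longrightarrow> bounded_op_L2 \<pi> (\<lambda>f x. K1 f x - K2 f x)"
  using bounded_op_L2_lincomb[of \<pi> K1 K2 "-1"] by simp

lemma bounded_op_L2_funpow: "bounded_op_L2 \<pi> K \<Longrightarrow> bounded_op_L2 \<pi> (K ^^ n)"
proof (induction n)
  case 0
  show ?case by (simp add: bounded_op_L2I[where C=1])
next
  case (Suc n)
  then show ?case using bounded_op_L2_comp[of \<pi> K "K ^^ n"] by (simp add: comp_def)
qed

lemma bounded_op_L2_mult:
  assumes "h \<in> borel_measurable lborel" and "\<And>x. \<bar>h x\<bar> \<le> B"
  shows "bounded_op_L2 \<pi> (\<lambda>f x. h x * f x)"
  using assms square_integrable_mult_bounded[of "piM \<pi>" _ h B]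
  by (intro bounded_op_L2I[where C=B]) (auto simp: algebra_simps)

lemma bounded_op_L2_mult_indicator:
  assumes "A \<in> sets borel"
  shows "bounded_op_L2 \<pi> (\<lambda>f x. indicator A x * f x)"
  using assms by (intro bounded_op_L2_mult[where B=1]) (auto split: split_indicator)

lemma bounded_op_L2_restr_in: "bounded_op_L2 \<pi> U \<Longrightarrow> bounded_op_L2 \<pi> (restr_in a U)"
  using bounded_op_L2_comp[OF bounded_op_L2_mult_indicator[of "{-a..a}"]]
  by (simp add: restr_in_def[abs_def])

lemma bounded_op_L2_restr_out: "bounded_op_L2 \<pi> U \<Longrightarrow> bounded_op_L2 \<pi> (restr_out a U)"
  using bounded_op_L2_comp[OF bounded_op_L2_mult_indicator[of "UNIV - {-a..a}"]]
  by (simp add: restr_out_def[abs_def])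

definition L2_Cauchy :: "(real \<Rightarrow> real) \<Rightarrow> (nat \<Rightarrow> real \<Rightarrow> real) \<Rightarrow> bool" where
  "L2_Cauchy \<pi> G \<longleftrightarrow> (\<forall>e>0. \<exists>N. \<forall>m\<ge>N. \<forall>k\<ge>N. L2_norm (piM \<pi>) (\<lambda>x. G m x - G k x) < e)"

lemma L2_Cauchy_subseq:
  assumes "L2_Cauchy \<pi> G" "strict_mono r"
  shows "L2_Cauchy \<pi> (\<lambda>k. G (r k))"
  unfolding L2_Cauchy_def
proof (intro allI impI)
  fix e :: real assume "e > 0"
  then obtain N where N: "\<And>m k. m \<ge> N \<Longrightarrow> k \<ge> N \<Longrightarrow> L2_norm (piM \<pi>) (\<lambda>x. G m x - G k x) < e"
    using assms(1) unfolding L2_Cauchy_def by blast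
  have "r m \<ge> N" if "m \<ge> N" for m using seq_suble[OF assms(2)] that le_trans by blast
  with N show "\<exists>N. \<forall>m\<ge>N. \<forall>k\<ge>N. L2_norm (piM \<pi>) (\<lambda>x. G (r m) x - G (r k) x) < e" by blast
qed

lemma L2_Cauchy_lincomb:
  assumes G: "L2_Cauchy \<pi> G" "\<And>k. square_integrable (piM \<pi>) (G k)"
    and H: "L2_Cauchy \<pi> H" "\<And>k. square_integrable (piM \<pi>) (H k)"
  shows "L2_Cauchy \<pi> (\<lambda>k x. G k x + d * H k x)"
  unfolding L2_Cauchy_def
proof (intro allI impI)
  fix e :: real assume "e > 0"
  define e' where "e' = e / (1 + \<bar>d\<bar>)"
  have "e' > 0" using \<open>e > 0\<close> abs_add_one_gt_zero[of d] unfolding e'_def by simp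
  then obtain N1 N2 where
    N1: "\<And>m k. m \<ge> N1 \<Longrightarrow> k \<ge> N1 \<Longrightarrow> L2_norm (piM \<pi>) (\<lambda>x. G m x - G k x) < e'" and
    N2: "\<And>m k. m \<ge> N2 \<Longrightarrow> k \<ge> N2 \<Longrightarrow> L2_norm (piM \<pi>) (\<lambda>x. H m x - H k x) < e'"
    using G(1) H(1) unfolding L2_Cauchy_def by meson
  have "L2_norm (piM \<pi>) (\<lambda>x. (G m x + d * H m x) - (G k x + d * H k x)) < e"
    if "m \<ge> max N1 N2" "k \<ge> max N1 N2" for m k
  proof -
    have sq: "square_integrable (piM \<pi>) (\<lambda>x. G m x - G k x)" "square_integrable (piM \<pi>) (\<lambda>x. H m x - H k x)"
      by (intro square_integrable_diff G(2) H(2))+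
    have "(\<lambda>x. (G m x + d * H m x) - (G k x + d * H k x)) = (\<lambda>x. (G m x - G k x) + d * (H m x - H k x))"
      by (simp add: algebra_simps)
    then have "L2_norm (piM \<pi>) (\<lambda>x. (G m x + d * H m x) - (G k x + d * H k x))
        \<le> L2_norm (piM \<pi>) (\<lambda>x. G m x - G k x) + \<bar>d\<bar> * L2_norm (piM \<pi>) (\<lambda>x. H m x - H k x)"
      using L2_norm_triangle[OF sq(1) square_integrable_cmult[OF sq(2)]] by (simp add: L2_norm_cmult)
    also have "\<dots> < e' + \<bar>d\<bar> * e'"
      using N1[of m k] N2[of m k] that by (intro add_less_le_mono mult_left_mono) auto
    also have "\<dots> = (1 + \<bar>d\<bar>) * e'" by (simp add: algebra_simps)
    also have "\<dots> = e" unfolding e'_def using abs_add_one_gt_zero[of d] by simp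
    finally show ?thesis .
  qed
  then show "\<exists>N. \<forall>m\<ge>N. \<forall>k\<ge>N. L2_norm (piM \<pi>) (\<lambda>x. (G m x + d * H m x) - (G k x + d * H k x)) < e"
    by blast
qed

lemma L2_Cauchy_bounded_op:
  assumes K: "bounded_op_L2 \<pi> K" and G: "L2_Cauchy \<pi> G" "\<And>k. square_integrable (piM \<pi>) (G k)"
  shows "L2_Cauchy \<pi> (\<lambda>k. K (G k))"
  unfolding L2_Cauchy_def
proof (intro allI impI)
  fix e :: real assume "e > 0"
  obtain C where "C > 0" and C: "\<And>f g. square_integrable (piM \<pi>) f \<Longrightarrow> square_integrable (piM \<pi>) g \<Longrightarrow>
    L2_norm (piM \<pi>) (\<lambda>x. K f x - K g x) \<le> C * L2_norm (piM \<pi>) (\<lambda>x. f x - g x)"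
    using bounded_op_L2_LipschitzE[OF K] by blast
  obtain N where N: "\<And>m k. m \<ge> N \<Longrightarrow> k \<ge> N \<Longrightarrow> L2_norm (piM \<pi>) (\<lambda>x. G m x - G k x) < e / C"
    using G(1) \<open>e > 0\<close> \<open>C > 0\<close> unfolding L2_Cauchy_def by (meson divide_pos_pos)
  have "L2_norm (piM \<pi>) (\<lambda>x. K (G m) x - K (G k) x) < e" if "m \<ge> N" "k \<ge> N" for m k
  proof -
    have "L2_norm (piM \<pi>) (\<lambda>x. K (G m) x - K (G k) x) \<le> C * L2_norm (piM \<pi>) (\<lambda>x. G m x - G k x)"
      by (intro C G(2))
    also have "\<dots> < e" using N[OF that] \<open>C > 0\<close> by (simp add: pos_less_divide_eq mult.commute)
    finally show ?thesis .
  qed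
  then show "\<exists>N. \<forall>m\<ge>N. \<forall>k\<ge>N. L2_norm (piM \<pi>) (\<lambda>x. K (G m) x - K (G k) x) < e" by blast
qed

lemma L2_Cauchy_if_L2_convergent:
  assumes G: "\<And>k. square_integrable (piM \<pi>) (G k)" and g: "square_integrable (piM \<pi>) g"
    and lim: "(\<lambda>k. L2_norm (piM \<pi>) (\<lambda>x. G k x - g x)) \<longlonglongrightarrow> 0"
  shows "L2_Cauchy \<pi> G"
  unfolding L2_Cauchy_def
proof (intro allI impI)
  fix e :: real assume "e > 0"
  then obtain N where N: "\<And>k. k \<ge> N \<Longrightarrow> L2_norm (piM \<pi>) (\<lambda>x. G k x - g x) < e / 2"
    using lim L2_norm_nonneg unfolding LIMSEQ_iff by (metis abs_of_nonneg diff_zero half_gt_zero real_norm_def)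
  have "L2_norm (piM \<pi>) (\<lambda>x. G m x - G k x) < e" if "m \<ge> N" "k \<ge> N" for m k
  proof -
    have sq: "square_integrable (piM \<pi>) (\<lambda>x. G m x - g x)" "square_integrable (piM \<pi>) (\<lambda>x. G k x - g x)"
      by (intro square_integrable_diff G g)+
    have "L2_norm (piM \<pi>) (\<lambda>x. G m x - G k x) = L2_norm (piM \<pi>) (\<lambda>x. (G m x - g x) + (-1) * (G k x - g x))"
      by (rule arg_cong[where f="L2_norm _"]) auto
    also have "\<dots> \<le> L2_norm (piM \<pi>) (\<lambda>x. G m x - g x) + L2_norm (piM \<pi>) (\<lambda>x. (-1) * (G k x - g x))"
      by (rule L2_norm_triangle[OF sq(1) square_integrable_cmult[OF sq(2)]])
    also have "\<dots> = L2_norm (piM \<pi>) (\<lambda>x. G m x - g x) + L2_norm (piM \<pi>) (\<lambda>x. G k x - g x)"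
      using L2_norm_cmult[of "piM \<pi>" "-1" "\<lambda>x. G k x - g x"] by simp
    also have "\<dots> < e / 2 + e / 2" using N that by (intro add_strict_mono) auto
    finally show ?thesis by simp
  qed
  then show "\<exists>N. \<forall>m\<ge>N. \<forall>k\<ge>N. L2_norm (piM \<pi>) (\<lambda>x. G m x - G k x) < e" by blast
qed

lemma compact_op_L2_iff:
  "compact_op_L2 \<pi> K \<longleftrightarrow> bounded_op_L2 \<pi> K \<and>
     (\<forall>(F :: nat \<Rightarrow> real \<Rightarrow> real) B. (\<forall>k. square_integrable (piM \<pi>) (F k) \<and> L2_norm (piM \<pi>) (F k) \<le> B) \<longrightarrow>
        (\<exists>r. strict_mono r \<and> L2_Cauchy \<pi> (\<lambda>k. K (F (r k)))))"
  by (simp add: compact_op_L2_def L2_iff_square_integrable L2norm_eq_L2_norm L2_Cauchy_def)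

lemma compact_op_L2I:
  assumes "bounded_op_L2 \<pi> K"
    and "\<And>(F :: nat \<Rightarrow> real \<Rightarrow> real) B. (\<And>k. square_integrable (piM \<pi>) (F k)) \<Longrightarrow> (\<And>k. L2_norm (piM \<pi>) (F k) \<le> B) \<Longrightarrow>
      \<exists>r. strict_mono r \<and> L2_Cauchy \<pi> (\<lambda>k. K (F (r k)))"
  shows "compact_op_L2 \<pi> K"
  unfolding compact_op_L2_iff using assms by blast

lemma compact_op_L2_bounded: "compact_op_L2 \<pi> K \<Longrightarrow> bounded_op_L2 \<pi> K"
  unfolding compact_op_L2_iff by blast

lemma compact_op_L2_Cauchy_subseq:
  fixes F :: "nat \<Rightarrow> real \<Rightarrow> real"
  shows "compact_op_L2 \<pi> K \<Longrightarrow> (\<And>k. square_integrable (piM \<pi>) (F k)) \<Longrightarrow> (\<And>k. L2_norm (piM \<pi>) (F k) \<le> B) \<Longrightarrow>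
    \<exists>r. strict_mono r \<and> L2_Cauchy \<pi> (\<lambda>k. K (F (r k)))"
  unfolding compact_op_L2_iff by blast

lemma compact_op_L2_AE_cong:
  assumes K': "compact_op_L2 \<pi> K'" and K: "bounded_op_L2 \<pi> K"
    and eq: "\<And>f. square_integrable (piM \<pi>) f \<Longrightarrow> AE x in piM \<pi>. K f x = K' f x"
  shows "compact_op_L2 \<pi> K"
proof (rule compact_op_L2I[OF K])
  fix F :: "nat \<Rightarrow> real \<Rightarrow> real" and B
  assume F: "\<And>k. square_integrable (piM \<pi>) (F k)" "\<And>k. L2_norm (piM \<pi>) (F k) \<le> B"
  obtain r where r: "strict_mono r" "L2_Cauchy \<pi> (\<lambda>k. K' (F (r k)))"
    using compact_op_L2_Cauchy_subseq[of \<pi> K' F B, OF K' F] by blast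
  have "L2_norm (piM \<pi>) (\<lambda>x. K (F m) x - K (F k) x) = L2_norm (piM \<pi>) (\<lambda>x. K' (F m) x - K' (F k) x)" for m k
  proof (rule L2_norm_cong_AE)
    show "(\<lambda>x. K (F m) x - K (F k) x) \<in> borel_measurable (piM \<pi>)"
      by (intro square_integrable_measurable square_integrable_diff bounded_op_L2_square_integrable[OF K] F(1))
    show "(\<lambda>x. K' (F m) x - K' (F k) x) \<in> borel_measurable (piM \<pi>)"
      by (intro square_integrable_measurable square_integrable_diff
          bounded_op_L2_square_integrable[OF compact_op_L2_bounded[OF K']] F(1))
    show "AE x in piM \<pi>. K (F m) x - K (F k) x = K' (F m) x - K' (F k) x"
      using eq[OF F(1)[of m]] eq[OF F(1)[of k]] by eventually_elim simp
  qed
  then have "L2_Cauchy \<pi> (\<lambda>k. K (F (r k)))" using r(2) by (simp add: L2_Cauchy_def)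
  with r(1) show "\<exists>r. strict_mono r \<and> L2_Cauchy \<pi> (\<lambda>k. K (F (r k)))" by blast
qed

lemma compact_op_L2_comp_bounded:
  assumes K: "compact_op_L2 \<pi> K" and B: "bounded_op_L2 \<pi> B"
  shows "compact_op_L2 \<pi> (\<lambda>f. K (B f))"
proof (rule compact_op_L2I[OF bounded_op_L2_comp[OF compact_op_L2_bounded[OF K] B]])
  fix F :: "nat \<Rightarrow> real \<Rightarrow> real" and Bd
  assume F: "\<And>k. square_integrable (piM \<pi>) (F k)" "\<And>k. L2_norm (piM \<pi>) (F k) \<le> Bd"
  obtain C where "C > 0" and C: "\<And>f. square_integrable (piM \<pi>) f \<Longrightarrow> L2_norm (piM \<pi>) (B f) \<le> C * L2_norm (piM \<pi>) f"
    using bounded_op_L2_normE[OF B] by blast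
  have "L2_norm (piM \<pi>) (B (F k)) \<le> C * Bd" for k
    using C[OF F(1)[of k]] F(2)[of k] \<open>C > 0\<close> by (meson mult_left_mono less_imp_le order_trans)
  then show "\<exists>r. strict_mono r \<and> L2_Cauchy \<pi> (\<lambda>k. K (B (F (r k))))"
    using compact_op_L2_Cauchy_subseq[of \<pi> K "\<lambda>k. B (F k)" "C * Bd", OF K bounded_op_L2_square_integrable[OF B F(1)]] by blast
qed

lemma bounded_comp_compact_op_L2:
  assumes B: "bounded_op_L2 \<pi> B" and K: "compact_op_L2 \<pi> K"
  shows "compact_op_L2 \<pi> (\<lambda>f. B (K f))"
proof (rule compact_op_L2I[OF bounded_op_L2_comp[OF B compact_op_L2_bounded[OF K]]])
  fix F :: "nat \<Rightarrow> real \<Rightarrow> real" and Bd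
  assume F: "\<And>k. square_integrable (piM \<pi>) (F k)" "\<And>k. L2_norm (piM \<pi>) (F k) \<le> Bd"
  obtain r where "strict_mono r" "L2_Cauchy \<pi> (\<lambda>k. K (F (r k)))"
    using compact_op_L2_Cauchy_subseq[of \<pi> K F Bd, OF K F] by blast
  moreover have "square_integrable (piM \<pi>) (K (F (r k)))" for k
    by (intro bounded_op_L2_square_integrable[OF compact_op_L2_bounded[OF K]] F(1))
  ultimately show "\<exists>r. strict_mono r \<and> L2_Cauchy \<pi> (\<lambda>k. B (K (F (r k))))"
    using L2_Cauchy_bounded_op[OF B] by blast
qed

lemma compact_op_L2_add:
  assumes K1: "compact_op_L2 \<pi> K1" and K2: "compact_op_L2 \<pi> K2"
  shows "compact_op_L2 \<pi> (\<lambda>f x. K1 f x + K2 f x)"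
proof (rule compact_op_L2I[OF bounded_op_L2_add[OF compact_op_L2_bounded[OF K1] compact_op_L2_bounded[OF K2]]])
  fix F :: "nat \<Rightarrow> real \<Rightarrow> real" and B
  assume F: "\<And>k. square_integrable (piM \<pi>) (F k)" "\<And>k. L2_norm (piM \<pi>) (F k) \<le> B"
  obtain r1 where r1: "strict_mono r1" "L2_Cauchy \<pi> (\<lambda>k. K1 (F (r1 k)))"
    using compact_op_L2_Cauchy_subseq[of \<pi> K1 F B, OF K1 F] by blast
  obtain r2 where r2: "strict_mono r2" "L2_Cauchy \<pi> (\<lambda>k. K2 (F (r1 (r2 k))))"
    using compact_op_L2_Cauchy_subseq[of \<pi> K2 "\<lambda>k. F (r1 k)" B, OF K2] F by blast
  have KF: "square_integrable (piM \<pi>) (K1 (F k))" "square_integrable (piM \<pi>) (K2 (F k))" for k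
    by (intro bounded_op_L2_square_integrable[OF compact_op_L2_bounded[OF K1]]
        bounded_op_L2_square_integrable[OF compact_op_L2_bounded[OF K2]] F(1))+
  have "L2_Cauchy \<pi> (\<lambda>k x. K1 (F (r1 (r2 k))) x + 1 * K2 (F (r1 (r2 k))) x)"
    by (rule L2_Cauchy_lincomb[OF L2_Cauchy_subseq[OF r1(2) r2(1)] KF(1) r2(2) KF(2)])
  then show "\<exists>r. strict_mono r \<and> L2_Cauchy \<pi> (\<lambda>k x. K1 (F (r k)) x + K2 (F (r k)) x)"
    using strict_mono_o[OF r1(1) r2(1)] by (intro exI[of _ "r1 \<circ> r2"]) simp
qed

section \<open>A pointwise Arzela-Ascoli theorem\<close>

lemma bounded_convergent_subseq_at_countable:
  fixes f :: "nat \<Rightarrow> 'a \<Rightarrow> real" and p :: "nat \<Rightarrow> 'a"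
  assumes bdd: "\<And>k n. \<bar>f k (p n)\<bar> \<le> L"
  shows "\<exists>d. strict_mono d \<and> (\<forall>n. convergent (\<lambda>k. f (d k) (p n)))"
proof -
  let ?P = "\<lambda>n s. convergent (\<lambda>k. f (s k) (p n))"
  interpret subseqs ?P
  proof unfold_locales
    fix n :: nat and s :: "nat \<Rightarrow> nat" assume "strict_mono s"
    have "(\<lambda>k. f (s k) (p n)) k \<in> {-L..L}" for k using bdd by (simp add: abs_le_iff minus_le_iff)
    then obtain l s' where "strict_mono s'" "((\<lambda>k. f (s k) (p n)) \<circ> s') \<longlonglongrightarrow> l"
      using compact_Icc compact_imp_seq_compact seq_compactE by metis
    then show "\<exists>s'. strict_mono s' \<and> ?P n (s \<circ> s')" by (auto simp: comp_def convergent_def)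
  qed
  have "?P n diagseq" for n
  proof -
    have reindex: "(\<lambda>k. f ((seqseq (Suc n) \<circ> (\<lambda>k. fold_reduce (Suc n) k (Suc n + k))) k) (p n))
        = (\<lambda>k. f (seqseq (Suc n) k) (p n)) \<circ> (\<lambda>k. fold_reduce (Suc n) k (Suc n + k))"
      by auto
    have "?P n (diagseq \<circ> ((+) (Suc n)))"
      unfolding diagseq_seqseq reindex
      by (intro convergent_subseq_convergent seqseq_holds subseq_diagonal_rest)
    then obtain l where "(\<lambda>k. f (diagseq (k + Suc n)) (p n)) \<longlonglongrightarrow> l"
      by (auto simp: add.commute dest: convergentD)
    then have "(\<lambda>k. f (diagseq k) (p n)) \<longlonglongrightarrow> l" by (rule LIMSEQ_offset)
    then show ?thesis by (auto simp: convergent_def)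
  qed
  then show ?thesis using subseq_diagseq by blast
qed

lemma uniformly_equicontinuous_convergent_from_dense:
  fixes f :: "nat \<Rightarrow> real \<Rightarrow> real"
  assumes dense: "\<And>x \<delta>. \<delta> > 0 \<Longrightarrow> \<exists>y\<in>D. \<bar>x - y\<bar> < \<delta>"
    and conv: "\<And>y. y \<in> D \<Longrightarrow> convergent (\<lambda>k. f k y)"
    and eqc: "\<And>e. e > 0 \<Longrightarrow> \<exists>\<delta>>0. \<forall>k x y. \<bar>x - y\<bar> < \<delta> \<longrightarrow> \<bar>f k x - f k y\<bar> < e"
  shows "convergent (\<lambda>k. f k x)"
proof -
  have "Cauchy (\<lambda>k. f k x)"
  proof (rule metric_CauchyI)
    fix e :: real assume "e > 0"
    then obtain \<delta> where "\<delta> > 0" and \<delta>: "\<And>k x y. \<bar>x - y\<bar> < \<delta> \<Longrightarrow> \<bar>f k x - f k y\<bar> < e / 3"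
      using eqc[of "e/3"] by auto
    obtain y where "y \<in> D" and xy: "\<bar>x - y\<bar> < \<delta>" using dense[OF \<open>\<delta> > 0\<close>] by blast
    have "Cauchy (\<lambda>k. f k y)" using conv[OF \<open>y \<in> D\<close>] by (simp add: convergent_Cauchy)
    then obtain N where N: "\<And>i j. i \<ge> N \<Longrightarrow> j \<ge> N \<Longrightarrow> \<bar>f i y - f j y\<bar> < e / 3"
      using \<open>e > 0\<close> unfolding Cauchy_def dist_real_def by (meson divide_pos_pos zero_less_numeral)
    have "dist (f i x) (f j x) < e" if "i \<ge> N" "j \<ge> N" for i j
      using \<delta>[OF xy, of i] \<delta>[OF xy, of j] N[OF that] unfolding dist_real_def by linarith
    then show "\<exists>N. \<forall>i\<ge>N. \<forall>j\<ge>N. dist (f i x) (f j x) < e" by blast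
  qed
  then show ?thesis by (simp add: Cauchy_convergent_iff)
qed

lemma Arzela_Ascoli_pointwise_subseq:
  fixes f :: "nat \<Rightarrow> real \<Rightarrow> real"
  assumes "a \<le> b"
    and bdd: "\<And>k x. x \<in> {a..b} \<Longrightarrow> \<bar>f k x\<bar> \<le> L"
    and eqc: "\<And>e. e > 0 \<Longrightarrow> \<exists>\<delta>>0. \<forall>k. \<forall>x\<in>{a..b}. \<forall>y\<in>{a..b}. \<bar>x - y\<bar> < \<delta> \<longrightarrow> \<bar>f k x - f k y\<bar> < e"
  shows "\<exists>r. strict_mono r \<and> (\<forall>x\<in>{a..b}. convergent (\<lambda>k. f (r k) x))"
proof -
  define g where "g k x = f k (clamp a b x)" for k x
  have clamp_in: "clamp a b x \<in> {a..b}" for x :: real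
    using clamp_in_interval[of a b x] \<open>a \<le> b\<close> by simp
  have clamp_dist: "\<bar>clamp a b x - clamp a b y\<bar> \<le> \<bar>x - y\<bar>" for x y :: real
    using dist_clamps_le_dist_args[of a b x y] by (simp add: dist_real_def)
  obtain p :: "nat \<Rightarrow> real" where p: "range p = \<rat>"
    using range_from_nat_into[of \<rat>] countable_rat Rats_0 by blast
  obtain d where "strict_mono d" and d: "\<And>n. convergent (\<lambda>k. g (d k) (p n))"
    using bounded_convergent_subseq_at_countable[of g p L] bdd clamp_in unfolding g_def by blast
  have conv: "convergent (\<lambda>k. g (d k) x)" for x
  proof (rule uniformly_equicontinuous_convergent_from_dense[where D="range p"])
    show "\<exists>y\<in>range p. \<bar>x - y\<bar> < \<delta>" if "\<delta> > 0" for x \<delta>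
      using Rats_dense_in_real[of x "x + \<delta>"] that unfolding p by force
    show "convergent (\<lambda>k. g (d k) y)" if "y \<in> range p" for y using d that by blast
    show "\<exists>\<delta>>0. \<forall>k x y. \<bar>x - y\<bar> < \<delta> \<longrightarrow> \<bar>g (d k) x - g (d k) y\<bar> < e" if "e > 0" for e
      using eqc[OF that] clamp_in clamp_dist unfolding g_def by (meson le_less_trans)
  qed
  have "convergent (\<lambda>k. f (d k) x)" if "x \<in> {a..b}" for x
    using conv[of x] clamp_cancel_cbox[of x a b] that by (simp add: g_def)
  with \<open>strict_mono d\<close> show ?thesis by blast
qed

section \<open>Positive continuous densities\<close>

lemma abs_le_square_plus_one: "\<bar>z::real\<bar> \<le> z\<^sup>2 + 1"
proof (cases "\<bar>z\<bar> \<le> 1")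
  case False
  then have "\<bar>z\<bar> * 1 \<le> \<bar>z\<bar> * \<bar>z\<bar>" by (intro mult_left_mono) auto
  then show ?thesis by (simp add: power2_eq_square abs_mult_self_eq)
qed (simp add: add_increasing)

locale positive_density =
  fixes \<pi> :: "real \<Rightarrow> real"
  assumes pi_pos: "\<And>x. \<pi> x > 0" and pi_cont: "continuous_on UNIV \<pi>" and pi_int: "integrable lborel \<pi>"
begin

lemma measurable_pi [measurable (raw)]: "f \<in> borel_measurable N \<Longrightarrow> (\<lambda>x. \<pi> (f x)) \<in> borel_measurable N"
  using measurable_compose[of f N borel \<pi> borel] borel_measurable_continuous_onI[OF pi_cont] by (simp add: comp_def)

lemma integrable_piM_iff:
  "f \<in> borel_measurable lborel \<Longrightarrow> integrable (piM \<pi>) f \<longleftrightarrow> integrable lborel (\<lambda>x. \<pi> x * f x)"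
  unfolding piM_def by (subst integrable_density) (auto simp: pi_pos less_imp_le)

lemma integral_piM:
  "f \<in> borel_measurable lborel \<Longrightarrow> integral\<^sup>L (piM \<pi>) f = (LINT x|lborel. \<pi> x * f x)"
  unfolding piM_def by (subst integral_density) (auto simp: pi_pos less_imp_le)

lemma square_integrable_piM_iff:
  "square_integrable (piM \<pi>) f \<longleftrightarrow> f \<in> borel_measurable lborel \<and> integrable lborel (\<lambda>x. \<pi> x * (f x)\<^sup>2)"
  unfolding square_integrable_def by (auto simp: integrable_piM_iff)

lemma L2_norm_piM: "f \<in> borel_measurable lborel \<Longrightarrow> L2_norm (piM \<pi>) f = sqrt (LINT x|lborel. \<pi> x * (f x)\<^sup>2)"
  by (simp add: L2_norm_def integral_piM)

lemma square_integrable_if_bounded: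
  assumes h: "h \<in> borel_measurable lborel" and hb: "\<And>x. \<bar>h x\<bar> \<le> B"
  shows "square_integrable (piM \<pi>) h"
proof -
  have "integrable lborel (\<lambda>x. \<pi> x * (h x)\<^sup>2)"
  proof (rule Bochner_Integration.integrable_bound[where f="\<lambda>x. B\<^sup>2 * \<pi> x"])
    show "integrable lborel (\<lambda>x. B\<^sup>2 * \<pi> x)" using pi_int by simp
    show "(\<lambda>x. \<pi> x * (h x)\<^sup>2) \<in> borel_measurable lborel" using h by measurable
    have "(h x)\<^sup>2 \<le> B\<^sup>2" for x using power_mono[OF hb[of x] abs_ge_zero, of 2] by simp
    then show "AE x in lborel. norm (\<pi> x * (h x)\<^sup>2) \<le> norm (B\<^sup>2 * \<pi> x)"
      using pi_pos by (simp add: mult.commute mult_left_mono less_imp_le)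
  qed
  with h show ?thesis by (simp add: square_integrable_piM_iff)
qed

lemma L2_Cauchy_if_bounded_pointwise_convergent:
  assumes G: "\<And>k. G k \<in> borel_measurable lborel" and bdd: "\<And>k x. \<bar>G k x\<bar> \<le> C"
    and lim: "\<And>x. (\<lambda>k. G k x) \<longlonglongrightarrow> g x"
  shows "L2_Cauchy \<pi> G"
proof (rule L2_Cauchy_if_L2_convergent)
  have g: "g \<in> borel_measurable lborel" by (rule borel_measurable_LIMSEQ_real[OF lim G])
  have g_bdd: "\<bar>g x\<bar> \<le> C" for x by (rule LIMSEQ_le_const2[OF tendsto_rabs[OF lim]]) (use bdd in auto)
  show "square_integrable (piM \<pi>) (G k)" for k by (rule square_integrable_if_bounded[OF G bdd])
  show "square_integrable (piM \<pi>) g" by (rule square_integrable_if_bounded[OF g g_bdd])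
  have diff_bdd: "(G k x - g x)\<^sup>2 \<le> (2 * C)\<^sup>2" for k x
  proof -
    have "\<bar>G k x - g x\<bar> \<le> 2 * C" using bdd[of k x] g_bdd[of x] by linarith
    from power_mono[OF this abs_ge_zero, of 2] show ?thesis by simp
  qed
  have "(\<lambda>k. LINT x|lborel. \<pi> x * (G k x - g x)\<^sup>2) \<longlonglongrightarrow> (LINT (x::real)|lborel. 0::real)"
  proof (rule integral_dominated_convergence[where w="\<lambda>x. \<pi> x * (2 * C)\<^sup>2"
      and s="\<lambda>k x. \<pi> x * (G k x - g x)\<^sup>2" and f="\<lambda>x::real. 0::real"])
    show "integrable lborel (\<lambda>x. \<pi> x * (2 * C)\<^sup>2)" using pi_int by simp
    show "AE x in lborel. (\<lambda>k. \<pi> x * (G k x - g x)\<^sup>2) \<longlonglongrightarrow> 0"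
    proof (intro AE_I2)
      fix x
      have "(\<lambda>k. G k x - g x) \<longlonglongrightarrow> 0" using tendsto_diff[OF lim[of x] tendsto_const[of "g x"]] by simp
      from tendsto_mult_left[OF tendsto_power[OF this, of 2], of "\<pi> x"]
      show "(\<lambda>k. \<pi> x * (G k x - g x)\<^sup>2) \<longlonglongrightarrow> 0" by simp
    qed
    show "AE x in lborel. norm (\<pi> x * (G k x - g x)\<^sup>2) \<le> \<pi> x * (2 * C)\<^sup>2" for k
      using pi_pos diff_bdd by (simp add: mult_left_mono less_imp_le)
  qed (use G g in measurable)
  then have "(\<lambda>k. sqrt (LINT x|lborel. \<pi> x * (G k x - g x)\<^sup>2)) \<longlonglongrightarrow> 0"
    using tendsto_real_sqrt by force
  then show "(\<lambda>k. L2_norm (piM \<pi>) (\<lambda>x. G k x - g x)) \<longlonglongrightarrow> 0"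
    using G g by (simp add: L2_norm_piM)
qed

lemma pi_lower_bound_on_interval:
  assumes "d \<ge> 0"
  obtains m where "m > 0" "\<And>y. y \<in> {-d..d} \<Longrightarrow> m \<le> \<pi> y"
proof -
  obtain y0 where "\<forall>y\<in>{-d..d}. \<pi> y0 \<le> \<pi> y"
    using continuous_attains_inf[of "{-d..d}" \<pi>] assms continuous_on_subset[OF pi_cont] by auto
  with pi_pos[of y0] show ?thesis by (intro that) auto
qed

lemma local_L1_bound:
  assumes F: "square_integrable (piM \<pi>) F" and "d \<ge> 0" and "m > 0" and m: "\<And>y. y \<in> {-d..d} \<Longrightarrow> m \<le> \<pi> y"
  shows "integrable lborel (\<lambda>y. indicator {-d..d} y * \<bar>F y\<bar>)"
    and "(LINT y|lborel. indicator {-d..d} y * \<bar>F y\<bar>) \<le> 2 * d + (L2_norm (piM \<pi>) F)\<^sup>2 / m"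
proof -
  have [measurable]: "F \<in> borel_measurable lborel" and F_int: "integrable lborel (\<lambda>y. \<pi> y * (F y)\<^sup>2)"
    using F by (auto simp: square_integrable_piM_iff)
  have pt: "indicator {-d..d} y * \<bar>F y\<bar> \<le> indicator {-d..d} y + \<pi> y * (F y)\<^sup>2 / m" for y
  proof (cases "y \<in> {-d..d}")
    case True
    have "\<bar>F y\<bar> \<le> 1 + (F y)\<^sup>2" using abs_le_square_plus_one[of "F y"] by simp
    also have "(F y)\<^sup>2 \<le> \<pi> y * (F y)\<^sup>2 / m"
      using m[OF True] \<open>m > 0\<close> by (simp add: field_simps mult_right_mono)
    finally show ?thesis using True by simp
  qed (use pi_pos[of y] \<open>m > 0\<close> in simp)
  have iu: "integrable lborel (\<lambda>y. indicator {-d..d} y + \<pi> y * (F y)\<^sup>2 / m)"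
    using F_int by (intro Bochner_Integration.integrable_add integrable_divide integrable_real_indicator)
      (auto simp: emeasure_lborel_Icc_eq)
  show i: "integrable lborel (\<lambda>y. indicator {-d..d} y * \<bar>F y\<bar>)"
    by (rule Bochner_Integration.integrable_bound[OF iu]) (use pt order_trans[OF pt abs_ge_self] in auto)
  have "(LINT y|lborel. indicator {-d..d} y * \<bar>F y\<bar>) \<le> (LINT y|lborel. indicator {-d..d} y + \<pi> y * (F y)\<^sup>2 / m)"
    by (rule integral_mono[OF i iu pt])
  also have "\<dots> = 2 * d + (L2_norm (piM \<pi>) F)\<^sup>2 / m"
    using F_int \<open>d \<ge> 0\<close> by (simp add: L2_norm_piM integral_nonneg_AE pi_pos less_imp_le)
  finally show "(LINT y|lborel. indicator {-d..d} y * \<bar>F y\<bar>) \<le> 2 * d + (L2_norm (piM \<pi>) F)\<^sup>2 / m" .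
qed

lemma local_L1_uniform_bound:
  assumes "d \<ge> 0" and F: "\<And>k. square_integrable (piM \<pi>) (F k)" "\<And>k. L2_norm (piM \<pi>) (F k) \<le> B"
  obtains W where "W \<ge> 0" "\<And>k. integrable lborel (\<lambda>y. indicator {-d..d} y * \<bar>F k y\<bar>)"
    "\<And>k. (LINT y|lborel. indicator {-d..d} y * \<bar>F k y\<bar>) \<le> W"
proof -
  obtain m where "m > 0" and m: "\<And>y. y \<in> {-d..d} \<Longrightarrow> m \<le> \<pi> y"
    using pi_lower_bound_on_interval[OF \<open>d \<ge> 0\<close>] by blast
  have "(LINT y|lborel. indicator {-d..d} y * \<bar>F k y\<bar>) \<le> 2 * d + B\<^sup>2 / m" for k
  proof -
    have "(L2_norm (piM \<pi>) (F k))\<^sup>2 \<le> B\<^sup>2" using F(2)[of k] L2_norm_nonneg by (intro power_mono) auto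
    then have "2 * d + (L2_norm (piM \<pi>) (F k))\<^sup>2 / m \<le> 2 * d + B\<^sup>2 / m"
      using \<open>m > 0\<close> by (simp add: divide_right_mono)
    with local_L1_bound(2)[OF F(1)[of k] \<open>d \<ge> 0\<close> \<open>m > 0\<close> m] show ?thesis by linarith
  qed
  moreover have "2 * d + B\<^sup>2 / m \<ge> 0" using \<open>d \<ge> 0\<close> \<open>m > 0\<close> by simp
  ultimately show ?thesis using local_L1_bound(1)[OF F(1) \<open>d \<ge> 0\<close> \<open>m > 0\<close> m] that by blast
qed

end

section \<open>The Metropolis-Hastings kernel\<close>

locale mh_kernel = positive_density +
  fixes q :: "real \<Rightarrow> real \<Rightarrow> real" and Mq s :: real
  assumes q_nonneg: "\<And>x y. q x y \<ge> 0" and q_cont: "continuous_on UNIV (\<lambda>(x, y). q x y)"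
    and q_bdd: "\<And>x y. q x y \<le> Mq" and q_int: "\<And>x. integrable lborel (q x)"
    and q_one: "\<And>x. (LINT y|lborel. q x y) = 1"
    and s_pos: "s > 0" and q_supp: "\<And>x u. \<bar>u\<bar> > s \<Longrightarrow> q x (x + u) = 0"
begin

abbreviation "t \<equiv> mh_t \<pi> q"

lemma t_continuous: "continuous_on UNIV (\<lambda>p. t (fst p) (snd p))"
proof -
  have qc: "continuous_on UNIV (\<lambda>p. q (fst p) (snd p))" using q_cont by (simp add: case_prod_unfold)
  have qs: "continuous_on UNIV (\<lambda>p. q (snd p) (fst p))"
    using continuous_on_compose2[OF qc continuous_on_swap[of UNIV]] by (simp add: prod.swap_def)
  have "continuous_on UNIV (\<lambda>p::real \<times> real. \<pi> (fst p))"
    by (rule continuous_on_compose2[OF pi_cont continuous_on_fst[OF continuous_on_id]]) auto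
  moreover have "continuous_on UNIV (\<lambda>p::real \<times> real. \<pi> (snd p))"
    by (rule continuous_on_compose2[OF pi_cont continuous_on_snd[OF continuous_on_id]]) auto
  ultimately show ?thesis using qc qs pi_pos
    unfolding mh_t_def by (intro continuous_on_min continuous_on_divide continuous_on_mult) (auto simp: less_imp_neq[symmetric])
qed

lemma measurable_t [measurable (raw)]:
  "f \<in> borel_measurable N \<Longrightarrow> g \<in> borel_measurable N \<Longrightarrow> (\<lambda>x. t (f x) (g x)) \<in> borel_measurable N"
proof -
  assume "f \<in> borel_measurable N" "g \<in> borel_measurable N"
  then have "(\<lambda>x. (f x, g x)) \<in> measurable N (borel \<Otimes>\<^sub>M borel)" by (rule measurable_Pair)
  moreover have "(\<lambda>p. t (fst p) (snd p)) \<in> borel_measurable (borel \<Otimes>\<^sub>M borel)"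
    using borel_measurable_continuous_onI[OF t_continuous] by (simp add: borel_prod)
  ultimately have "(\<lambda>x. t (fst (f x, g x)) (snd (f x, g x))) \<in> borel_measurable N"
    by (rule measurable_compose)
  then show ?thesis by simp
qed

lemma t_nonneg: "t x y \<ge> 0"
  using q_nonneg[of x y] q_nonneg[of y x] pi_pos[of x] pi_pos[of y] by (simp add: mh_t_def)

lemma t_le_q: "t x y \<le> q x y"
  by (simp add: mh_t_def)

lemma t_le_Mq: "t x y \<le> Mq"
  using t_le_q q_bdd order_trans by blast

lemma t_le_Mq_density_ratio: "t x y \<le> Mq * \<pi> y / \<pi> x"
proof -
  have "t x y \<le> \<pi> y * q y x / \<pi> x" by (simp add: mh_t_def)
  also have "\<dots> \<le> Mq * \<pi> y / \<pi> x"
    using q_bdd[of y x] pi_pos[of x] pi_pos[of y] by (intro divide_right_mono) (auto simp: mult.commute)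
  finally show ?thesis .
qed

lemma t_eq_0_if_far: "\<bar>x - y\<bar> > s \<Longrightarrow> t x y = 0"
  using q_supp[of "y - x" x] t_nonneg[of x y] t_le_q[of x y] by (simp add: abs_minus_commute)

lemma t_detailed_balance: "\<pi> x * t x y = \<pi> y * t y x"
  using pi_pos[of x] pi_pos[of y] by (simp add: mh_t_def min_mult_distrib_left min.commute)

lemma t_integrable: "integrable lborel (t x)"
  by (rule Bochner_Integration.integrable_bound[OF q_int[of x]]) (auto simp: t_nonneg t_le_q q_nonneg)

lemma t_integral_le_1: "(LINT y|lborel. t x y) \<le> 1"
  using integral_mono[OF t_integrable q_int t_le_q] q_one by simp

lemma integrable_square_times_t:
  assumes f: "square_integrable (piM \<pi>) f"
  shows "integrable lborel (\<lambda>y. (f y)\<^sup>2 * t x y)"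
proof (rule Bochner_Integration.integrable_bound)
  have [measurable]: "f \<in> borel_measurable lborel" using square_integrable_measurable[OF f] by simp
  show "integrable lborel (\<lambda>y. (Mq / \<pi> x) * (\<pi> y * (f y)\<^sup>2))"
    using f by (simp add: square_integrable_piM_iff)
  show "(\<lambda>y. (f y)\<^sup>2 * t x y) \<in> borel_measurable lborel" by measurable
  have "norm ((f y)\<^sup>2 * t x y) \<le> norm ((Mq / \<pi> x) * (\<pi> y * (f y)\<^sup>2))" for y
  proof -
    have "norm ((f y)\<^sup>2 * t x y) = (f y)\<^sup>2 * t x y" using t_nonneg[of x y] by simp
    also have "\<dots> \<le> (Mq / \<pi> x) * (\<pi> y * (f y)\<^sup>2)"
      using mult_left_mono[OF t_le_Mq_density_ratio, of "(f y)\<^sup>2" x y] by (simp add: mult_ac)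
    also have "\<dots> \<le> norm ((Mq / \<pi> x) * (\<pi> y * (f y)\<^sup>2))" by (metis real_norm_def abs_ge_self)
    finally show ?thesis .
  qed
  then show "AE y in lborel. norm ((f y)\<^sup>2 * t x y) \<le> norm ((Mq / \<pi> x) * (\<pi> y * (f y)\<^sup>2))"
    by simp
qed

lemma integrable_times_t:
  assumes f: "square_integrable (piM \<pi>) f"
  shows "integrable lborel (\<lambda>y. f y * t x y)"
proof (rule Bochner_Integration.integrable_bound)
  have [measurable]: "f \<in> borel_measurable lborel" using square_integrable_measurable[OF f] by simp
  show "integrable lborel (\<lambda>y. (f y)\<^sup>2 * t x y + t x y)"
    using integrable_square_times_t[OF f] t_integrable by simp
  show "(\<lambda>y. f y * t x y) \<in> borel_measurable lborel" by measurable
  have "\<bar>f y\<bar> * t x y \<le> ((f y)\<^sup>2 + 1) * t x y" for y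
    by (rule mult_right_mono[OF abs_le_square_plus_one t_nonneg])
  then show "AE y in lborel. norm (f y * t x y) \<le> norm ((f y)\<^sup>2 * t x y + t x y)"
    using t_nonneg by (simp add: abs_mult algebra_simps)
qed

lemma measurable_mh_T [measurable]:
  assumes [measurable]: "f \<in> borel_measurable lborel"
  shows "mh_T \<pi> q f \<in> borel_measurable lborel"
  unfolding mh_T_def[abs_def]
  by (rule sigma_finite_measure.borel_measurable_lebesgue_integral[OF sigma_finite_lborel]) measurable

lemma mh_T_lin:
  assumes "square_integrable (piM \<pi>) f" "square_integrable (piM \<pi>) g"
  shows "mh_T \<pi> q (\<lambda>y. c * f y + g y) x = c * mh_T \<pi> q f x + mh_T \<pi> q g x"
  using integrable_times_t[OF assms(1)] integrable_times_t[OF assms(2)]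
  by (simp add: mh_T_def distrib_right mult.assoc)

lemma mh_T_square_le:
  assumes f: "square_integrable (piM \<pi>) f"
  shows "(mh_T \<pi> q f x)\<^sup>2 \<le> (LINT y|lborel. (f y)\<^sup>2 * t x y)"
proof -
  define u where "u y = f y * sqrt (t x y)" for y
  define v where "v y = sqrt (t x y)" for y
  have uu: "(\<lambda>y. (u y)\<^sup>2) = (\<lambda>y. (f y)\<^sup>2 * t x y)" unfolding u_def by (auto simp: power_mult_distrib t_nonneg)
  have vv: "(\<lambda>y. (v y)\<^sup>2) = t x" unfolding v_def by (auto simp: t_nonneg)
  have uv: "(\<lambda>y. u y * v y) = (\<lambda>y. f y * t x y)" unfolding u_def v_def by (auto simp: t_nonneg)
  have [measurable]: "f \<in> borel_measurable lborel" using square_integrable_measurable[OF f] by simp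
  have "square_integrable lborel u" "square_integrable lborel v"
    using integrable_square_times_t[OF f] t_integrable
    unfolding square_integrable_def uu vv by (auto simp: u_def[abs_def] v_def[abs_def])
  from Cauchy_Schwarz_integral[OF this]
  have "(mh_T \<pi> q f x)\<^sup>2 \<le> (LINT y|lborel. (f y)\<^sup>2 * t x y) * (LINT y|lborel. t x y)"
    by (simp add: uu vv uv mh_T_def)
  also have "\<dots> \<le> (LINT y|lborel. (f y)\<^sup>2 * t x y)"
    using mult_left_mono[OF t_integral_le_1] by (simp add: integral_nonneg_AE t_nonneg)
  finally show ?thesis .
qed


text \<open>Detailed balance makes \<open>T\<close> a contraction of \<open>L\<^sup>2(\<pi>)\<close>: by Cauchy--Schwarz and Tonelli,
  \<open>\<integral> \<pi> (T f)\<^sup>2 \<le> \<integral>\<integral> \<pi>(x) t(x,y) f(y)\<^sup>2 = \<integral>\<integral> \<pi>(y) t(y,x) f(y)\<^sup>2 \<le> \<integral> \<pi> f\<^sup>2\<close>.\<close>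

lemma mh_T_nn_integral_le:
  assumes f: "square_integrable (piM \<pi>) f"
  shows "(\<integral>\<^sup>+ x. ennreal (\<pi> x * (mh_T \<pi> q f x)\<^sup>2) \<partial>lborel) \<le> ennreal (LINT y|lborel. \<pi> y * (f y)\<^sup>2)"
proof -
  have [measurable]: "f \<in> borel_measurable lborel" using square_integrable_measurable[OF f] by simp
  have "(\<integral>\<^sup>+ x. ennreal (\<pi> x * (mh_T \<pi> q f x)\<^sup>2) \<partial>lborel) \<le>
        (\<integral>\<^sup>+ x. ennreal (\<pi> x * (LINT y|lborel. (f y)\<^sup>2 * t x y)) \<partial>lborel)"
    by (intro nn_integral_mono ennreal_leI mult_left_mono mh_T_square_le[OF f]) (auto simp: pi_pos less_imp_le)
  also have "\<dots> = (\<integral>\<^sup>+ x. (\<integral>\<^sup>+ y. ennreal (\<pi> x * ((f y)\<^sup>2 * t x y)) \<partial>lborel) \<partial>lborel)"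
    using integrable_square_times_t[OF f]
    by (intro nn_integral_cong) (simp add: nn_integral_eq_integral t_nonneg pi_pos less_imp_le)
  also have "\<dots> = (\<integral>\<^sup>+ x. (\<integral>\<^sup>+ y. ennreal (\<pi> y * (f y)\<^sup>2 * t y x) \<partial>lborel) \<partial>lborel)"
    by (intro nn_integral_cong arg_cong[where f=ennreal])
      (metis t_detailed_balance mult.assoc mult.commute mult.left_commute)
  also have "\<dots> = (\<integral>\<^sup>+ y. (\<integral>\<^sup>+ x. ennreal (\<pi> y * (f y)\<^sup>2 * t y x) \<partial>lborel) \<partial>lborel)"
    by (rule lborel_pair.Fubini'[of "\<lambda>y x. ennreal (\<pi> x * (f x)\<^sup>2 * t x y)", symmetric]) measurable
  also have "\<dots> = (\<integral>\<^sup>+ y. ennreal (\<pi> y * (f y)\<^sup>2 * (LINT x|lborel. t y x)) \<partial>lborel)"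
    using t_integrable by (intro nn_integral_cong) (simp add: nn_integral_eq_integral t_nonneg pi_pos less_imp_le)
  also have "\<dots> \<le> (\<integral>\<^sup>+ y. ennreal (\<pi> y * (f y)\<^sup>2) \<partial>lborel)"
  proof (intro nn_integral_mono ennreal_leI)
    fix y
    show "\<pi> y * (f y)\<^sup>2 * (LINT x|lborel. t y x) \<le> \<pi> y * (f y)\<^sup>2"
      using mult_left_mono[OF t_integral_le_1[of y], of "\<pi> y * (f y)\<^sup>2"] pi_pos[of y] by simp
  qed
  also have "\<dots> = ennreal (LINT y|lborel. \<pi> y * (f y)\<^sup>2)"
    using f by (intro nn_integral_eq_integral) (auto simp: square_integrable_piM_iff pi_pos less_imp_le)
  finally show ?thesis .
qed

lemma mh_T_contraction:
  assumes f: "square_integrable (piM \<pi>) f"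
  shows "square_integrable (piM \<pi>) (mh_T \<pi> q f)" "L2_norm (piM \<pi>) (mh_T \<pi> q f) \<le> L2_norm (piM \<pi>) f"
proof -
  have [measurable]: "f \<in> borel_measurable lborel" using square_integrable_measurable[OF f] by simp
  have nonneg: "0 \<le> \<pi> x * (mh_T \<pi> q f x)\<^sup>2" for x using pi_pos[of x] by simp
  have int: "integrable lborel (\<lambda>x. \<pi> x * (mh_T \<pi> q f x)\<^sup>2)"
  proof (rule integrableI_nonneg)
    show "(\<integral>\<^sup>+ x. ennreal (\<pi> x * (mh_T \<pi> q f x)\<^sup>2) \<partial>lborel) < \<infinity>"
      using mh_T_nn_integral_le[OF f] by (simp add: le_less_trans)
  qed (use nonneg in auto)
  then show "square_integrable (piM \<pi>) (mh_T \<pi> q f)" by (simp add: square_integrable_piM_iff)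
  have "ennreal (LINT x|lborel. \<pi> x * (mh_T \<pi> q f x)\<^sup>2) \<le> ennreal (LINT y|lborel. \<pi> y * (f y)\<^sup>2)"
    using mh_T_nn_integral_le[OF f] nn_integral_eq_integral[OF int] nonneg by simp
  moreover have "0 \<le> (LINT y|lborel. \<pi> y * (f y)\<^sup>2)" by (simp add: integral_nonneg_AE pi_pos less_imp_le)
  ultimately have "(LINT x|lborel. \<pi> x * (mh_T \<pi> q f x)\<^sup>2) \<le> (LINT y|lborel. \<pi> y * (f y)\<^sup>2)"
    using ennreal_le_iff by blast
  then show "L2_norm (piM \<pi>) (mh_T \<pi> q f) \<le> L2_norm (piM \<pi>) f" by (simp add: L2_norm_piM)
qed

lemma bounded_op_L2_mh_T: "bounded_op_L2 \<pi> (mh_T \<pi> q)"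
  using mh_T_contraction by (intro bounded_op_L2I[where C=1]) (auto simp: mh_T_lin)

lemma measurable_mh_r [measurable]: "mh_r \<pi> q \<in> borel_measurable lborel"
proof -
  have "(\<lambda>x. LINT y|lborel. t x y) \<in> borel_measurable lborel"
    by (rule sigma_finite_measure.borel_measurable_lebesgue_integral[OF sigma_finite_lborel]) measurable
  then show ?thesis unfolding mh_r_def[abs_def] by measurable
qed

lemma abs_mh_r_le_1: "\<bar>mh_r \<pi> q x\<bar> \<le> 1"
  using t_integral_le_1[of x] integral_nonneg_AE[of "t x" lborel] t_nonneg by (simp add: mh_r_def)

lemma bounded_op_L2_mh_R: "bounded_op_L2 \<pi> (mh_R \<pi> q)"
  using bounded_op_L2_mult[OF measurable_mh_r abs_mh_r_le_1] by (simp add: mh_R_def[abs_def])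

lemma bounded_op_L2_mh_P: "bounded_op_L2 \<pi> (mh_P \<pi> q)"
  using bounded_op_L2_add[OF bounded_op_L2_mh_R bounded_op_L2_mh_T] by (simp add: mh_P_def[abs_def])


lemma Mq_nonneg: "Mq \<ge> 0"
  using q_nonneg q_bdd order_trans by blast

lemma t_uniformly_continuous_on_box:
  assumes "\<epsilon> > 0"
  obtains \<delta> where "\<delta> > 0"
    "\<And>x x' y. x \<in> {-c..c} \<Longrightarrow> x' \<in> {-c..c} \<Longrightarrow> y \<in> {-d..d} \<Longrightarrow> \<bar>x - x'\<bar> < \<delta> \<Longrightarrow> \<bar>t x y - t x' y\<bar> \<le> \<epsilon>"
proof -
  have "uniformly_continuous_on ({-c..c} \<times> {-d..d}) (\<lambda>p. t (fst p) (snd p))"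
    by (intro compact_uniformly_continuous continuous_on_subset[OF t_continuous] compact_Times) auto
  then obtain \<delta> where "\<delta> > 0" and \<delta>: "\<And>p p'. p \<in> {-c..c} \<times> {-d..d} \<Longrightarrow> p' \<in> {-c..c} \<times> {-d..d} \<Longrightarrow>
      dist p' p < \<delta> \<Longrightarrow> dist (t (fst p') (snd p')) (t (fst p) (snd p)) < \<epsilon>"
    using assms unfolding uniformly_continuous_on_def by metis
  have "\<bar>t x y - t x' y\<bar> \<le> \<epsilon>" if "x \<in> {-c..c}" "x' \<in> {-c..c}" "y \<in> {-d..d}" "\<bar>x - x'\<bar> < \<delta>" for x x' y
    using \<delta>[of "(x', y)" "(x, y)"] that by (simp add: dist_Pair_Pair dist_real_def)
  with \<open>\<delta> > 0\<close> show ?thesis by (rule that)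
qed

definition T_local :: "real \<Rightarrow> real \<Rightarrow> (real \<Rightarrow> real) \<Rightarrow> real \<Rightarrow> real" where
  "T_local c d f x = indicator {-c..c} x * mh_T \<pi> q (\<lambda>y. indicator {-d..d} y * f y) x"

lemma bounded_op_L2_T_local: "bounded_op_L2 \<pi> (T_local c d)"
  using bounded_op_L2_comp[OF bounded_op_L2_mult_indicator
      bounded_op_L2_comp[OF bounded_op_L2_mh_T bounded_op_L2_mult_indicator]]
  by (simp add: T_local_def[abs_def])

lemma mh_T_indicator_bound:
  assumes "integrable lborel (\<lambda>y. indicator {-d..d} y * \<bar>F y\<bar>)"
  shows "\<bar>mh_T \<pi> q (\<lambda>y. indicator {-d..d} y * F y) x\<bar> \<le> Mq * (LINT y|lborel. indicator {-d..d} y * \<bar>F y\<bar>)"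
proof -
  have "\<bar>mh_T \<pi> q (\<lambda>y. indicator {-d..d} y * F y) x\<bar> \<le> (LINT y|lborel. norm (indicator {-d..d} y * F y * t x y))"
    unfolding mh_T_def using integral_norm_bound[of lborel "\<lambda>y. indicator {-d..d} y * F y * t x y"] by simp
  also have "\<dots> \<le> (LINT y|lborel. Mq * (indicator {-d..d} y * \<bar>F y\<bar>))"
  proof (rule integral_mono')
    show "integrable lborel (\<lambda>y. Mq * (indicator {-d..d} y * \<bar>F y\<bar>))" using assms by simp
    fix y
    show "0 \<le> Mq * (indicator {-d..d} y * \<bar>F y\<bar>)" using Mq_nonneg by simp
    show "norm (indicator {-d..d} y * F y * t x y) \<le> Mq * (indicator {-d..d} y * \<bar>F y\<bar>)"
      using mult_left_mono[OF t_le_Mq, of "\<bar>indicator {-d..d} y * F y\<bar>" x y] t_nonneg[of x y]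
      by (simp add: abs_mult mult_ac)
  qed
  finally show ?thesis by simp
qed

lemma mh_T_indicator_diff_bound:
  assumes F: "square_integrable (piM \<pi>) F" and int: "integrable lborel (\<lambda>y. indicator {-d..d} y * \<bar>F y\<bar>)"
    and \<epsilon>: "\<And>y. y \<in> {-d..d} \<Longrightarrow> \<bar>t x y - t x' y\<bar> \<le> \<epsilon>" "\<epsilon> \<ge> 0"
  shows "\<bar>mh_T \<pi> q (\<lambda>y. indicator {-d..d} y * F y) x - mh_T \<pi> q (\<lambda>y. indicator {-d..d} y * F y) x'\<bar>
     \<le> \<epsilon> * (LINT y|lborel. indicator {-d..d} y * \<bar>F y\<bar>)"
proof -
  have Fd: "square_integrable (piM \<pi>) (\<lambda>y. indicator {-d..d} y * F y)"
    by (rule square_integrable_mult_bounded(1)[OF F, of _ 1]) (auto split: split_indicator)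
  have eq: "mh_T \<pi> q (\<lambda>y. indicator {-d..d} y * F y) x - mh_T \<pi> q (\<lambda>y. indicator {-d..d} y * F y) x'
      = (LINT y|lborel. indicator {-d..d} y * F y * (t x y - t x' y))"
    using integrable_times_t[OF Fd] by (simp add: mh_T_def right_diff_distrib)
  have "\<bar>LINT y|lborel. indicator {-d..d} y * F y * (t x y - t x' y)\<bar> \<le> (LINT y|lborel. norm (indicator {-d..d} y * F y * (t x y - t x' y)))"
    using integral_norm_bound[of lborel "\<lambda>y. indicator {-d..d} y * F y * (t x y - t x' y)"] by simp
  also have "\<dots> \<le> (LINT y|lborel. \<epsilon> * (indicator {-d..d} y * \<bar>F y\<bar>))"
  proof (rule integral_mono')
    show "integrable lborel (\<lambda>y. \<epsilon> * (indicator {-d..d} y * \<bar>F y\<bar>))" using int by simp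
    fix y
    show "0 \<le> \<epsilon> * (indicator {-d..d} y * \<bar>F y\<bar>)" using \<epsilon>(2) by simp
    show "norm (indicator {-d..d} y * F y * (t x y - t x' y)) \<le> \<epsilon> * (indicator {-d..d} y * \<bar>F y\<bar>)"
      using mult_left_mono[OF \<epsilon>(1), of y "\<bar>F y\<bar>"] by (auto simp: abs_mult mult_ac split: split_indicator)
  qed
  finally show ?thesis unfolding eq by simp
qed

lemma T_local_uniformly_bounded_equicontinuous:
  assumes "d \<ge> 0" and F: "\<And>k. square_integrable (piM \<pi>) (F k)" "\<And>k. L2_norm (piM \<pi>) (F k) \<le> B"
  obtains L where "\<And>k x. \<bar>T_local c d (F k) x\<bar> \<le> L"
    and "\<And>e. e > 0 \<Longrightarrow> \<exists>\<delta>>0. \<forall>k. \<forall>x\<in>{-c..c}. \<forall>x'\<in>{-c..c}. \<bar>x - x'\<bar> < \<delta> \<longrightarrow>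
      \<bar>T_local c d (F k) x - T_local c d (F k) x'\<bar> < e"
proof -
  obtain W where "W \<ge> 0" and int: "\<And>k. integrable lborel (\<lambda>y. indicator {-d..d} y * \<bar>F k y\<bar>)"
    and W: "\<And>k. (LINT y|lborel. indicator {-d..d} y * \<bar>F k y\<bar>) \<le> W"
    using local_L1_uniform_bound[where F=F and B=B, OF \<open>d \<ge> 0\<close> F] by blast
  have T_local_in: "T_local c d (F k) x = mh_T \<pi> q (\<lambda>y. indicator {-d..d} y * F k y) x" if "x \<in> {-c..c}" for k x
    using that by (simp add: T_local_def)
  show ?thesis
  proof
    show "\<bar>T_local c d (F k) x\<bar> \<le> Mq * W" for k x
    proof -
      have "\<bar>T_local c d (F k) x\<bar> \<le> \<bar>mh_T \<pi> q (\<lambda>y. indicator {-d..d} y * F k y) x\<bar>"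
        by (simp add: T_local_def abs_mult split: split_indicator)
      also have "\<dots> \<le> Mq * (LINT y|lborel. indicator {-d..d} y * \<bar>F k y\<bar>)" by (rule mh_T_indicator_bound[OF int])
      also have "\<dots> \<le> Mq * W" using W Mq_nonneg by (intro mult_left_mono) auto
      finally show ?thesis .
    qed
  next
    fix e :: real assume "e > 0"
    define \<epsilon> where "\<epsilon> = e / (W + 1)"
    have "\<epsilon> > 0" using \<open>e > 0\<close> \<open>W \<ge> 0\<close> by (simp add: \<epsilon>_def)
    then obtain \<delta> where "\<delta> > 0" and \<delta>: "\<And>x x' y. x \<in> {-c..c} \<Longrightarrow> x' \<in> {-c..c} \<Longrightarrow> y \<in> {-d..d} \<Longrightarrow>
        \<bar>x - x'\<bar> < \<delta> \<Longrightarrow> \<bar>t x y - t x' y\<bar> \<le> \<epsilon>"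
      using t_uniformly_continuous_on_box[where c=c and d=d] by blast
    have "\<bar>T_local c d (F k) x - T_local c d (F k) x'\<bar> < e"
      if x: "x \<in> {-c..c}" "x' \<in> {-c..c}" "\<bar>x - x'\<bar> < \<delta>" for k x x'
    proof -
      have "\<bar>T_local c d (F k) x - T_local c d (F k) x'\<bar> \<le> \<epsilon> * (LINT y|lborel. indicator {-d..d} y * \<bar>F k y\<bar>)"
        unfolding T_local_in[OF x(1)] T_local_in[OF x(2)]
        using \<delta>[OF x(1,2) _ x(3)] \<open>\<epsilon> > 0\<close> by (intro mh_T_indicator_diff_bound F(1) int) auto
      also have "\<dots> \<le> \<epsilon> * W" using W \<open>\<epsilon> > 0\<close> by (intro mult_left_mono) auto
      also have "\<dots> < e" using \<open>e > 0\<close> \<open>W \<ge> 0\<close> by (simp add: \<epsilon>_def field_simps)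
      finally show ?thesis .
    qed
    with \<open>\<delta> > 0\<close> show "\<exists>\<delta>>0. \<forall>k. \<forall>x\<in>{-c..c}. \<forall>x'\<in>{-c..c}. \<bar>x - x'\<bar> < \<delta> \<longrightarrow>
      \<bar>T_local c d (F k) x - T_local c d (F k) x'\<bar> < e" by blast
  qed
qed

lemma compact_op_L2_T_local:
  assumes "c \<ge> 0" "d \<ge> 0"
  shows "compact_op_L2 \<pi> (T_local c d)"
proof (rule compact_op_L2I[OF bounded_op_L2_T_local])
  fix F :: "nat \<Rightarrow> real \<Rightarrow> real" and B
  assume F: "\<And>k. square_integrable (piM \<pi>) (F k)" "\<And>k. L2_norm (piM \<pi>) (F k) \<le> B"
  obtain L where L: "\<And>k x. \<bar>T_local c d (F k) x\<bar> \<le> L"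
    and eqc: "\<And>e. e > 0 \<Longrightarrow> \<exists>\<delta>>0. \<forall>k. \<forall>x\<in>{-c..c}. \<forall>x'\<in>{-c..c}. \<bar>x - x'\<bar> < \<delta> \<longrightarrow>
      \<bar>T_local c d (F k) x - T_local c d (F k) x'\<bar> < e"
    using T_local_uniformly_bounded_equicontinuous[where F=F and B=B, OF \<open>d \<ge> 0\<close> F] by blast
  obtain r where "strict_mono r" and conv_in: "\<forall>x\<in>{-c..c}. convergent (\<lambda>k. T_local c d (F (r k)) x)"
    using Arzela_Ascoli_pointwise_subseq[of "-c" c "\<lambda>k. T_local c d (F k)" L] assms L eqc by auto
  have "convergent (\<lambda>k. T_local c d (F (r k)) x)" for x
    using conv_in by (cases "x \<in> {-c..c}") (auto simp: T_local_def convergent_const)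
  then have "L2_Cauchy \<pi> (\<lambda>k. T_local c d (F (r k)))"
    using square_integrable_measurable[OF bounded_op_L2_square_integrable[OF bounded_op_L2_T_local F(1)]] L
    by (intro L2_Cauchy_if_bounded_pointwise_convergent) (auto simp: convergent_LIMSEQ_iff)
  with \<open>strict_mono r\<close> show "\<exists>r. strict_mono r \<and> L2_Cauchy \<pi> (\<lambda>k. T_local c d (F (r k)))" by blast
qed


lemma mh_T_eq_0_far_from_support:
  assumes f: "\<And>y. f y \<noteq> 0 \<Longrightarrow> y \<in> {-d..d}" and x: "x \<notin> {-(d+s)..d+s}"
  shows "mh_T \<pi> q f x = 0"
proof -
  have "f y * t x y = 0" for y
  proof (cases "f y = 0")
    case False
    then have "y \<in> {-d..d}" by (rule f)
    with x have "\<bar>x - y\<bar> > s" by auto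
    then show ?thesis by (simp add: t_eq_0_if_far)
  qed simp
  then have "(\<lambda>y. f y * t x y) = (\<lambda>y. 0)" by (intro ext)
  then show ?thesis by (simp add: mh_T_def)
qed

lemma mh_T_localize:
  assumes x: "x \<in> {-c..c}"
  shows "mh_T \<pi> q f x = mh_T \<pi> q (\<lambda>y. indicator {-(c+s)..c+s} y * f y) x"
proof -
  have "f y * t x y = indicator {-(c+s)..c+s} y * f y * t x y" for y
  proof (cases "y \<in> {-(c+s)..c+s}")
    case False
    with x have "\<bar>x - y\<bar> > s" by auto
    then show ?thesis by (simp add: t_eq_0_if_far)
  qed simp
  then have "(\<lambda>y. f y * t x y) = (\<lambda>y. indicator {-(c+s)..c+s} y * f y * t x y)" by (intro ext)
  then show ?thesis by (simp add: mh_T_def)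
qed

end

section \<open>Splitting the powers of P\<close>

locale mh_split = mh_kernel +
  fixes a :: real
  assumes a_pos: "a > 0"
begin

abbreviation "P \<equiv> mh_P \<pi> q"
abbreviation "A \<equiv> restr_in a (mh_R \<pi> q)"
abbreviation "T_in \<equiv> restr_in a (mh_T \<pi> q)"
abbreviation "S \<equiv> (\<lambda>g y. restr_out a (mh_R \<pi> q) g y + restr_out a (mh_T \<pi> q) g y)"

definition remainder :: "nat \<Rightarrow> (real \<Rightarrow> real) \<Rightarrow> real \<Rightarrow> real" where
  "remainder n f x = (P ^^ n) f x - (A ^^ n) f x - (S ^^ n) f x"

lemma bounded_op_L2_A: "bounded_op_L2 \<pi> A"
  by (rule bounded_op_L2_restr_in[OF bounded_op_L2_mh_R])

lemma bounded_op_L2_S: "bounded_op_L2 \<pi> S"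
  by (intro bounded_op_L2_add bounded_op_L2_restr_out bounded_op_L2_mh_R bounded_op_L2_mh_T)

lemma bounded_op_L2_remainder: "bounded_op_L2 \<pi> (remainder n)"
  using bounded_op_L2_diff[OF bounded_op_L2_diff[OF bounded_op_L2_funpow[OF bounded_op_L2_mh_P]
        bounded_op_L2_funpow[OF bounded_op_L2_A]] bounded_op_L2_funpow[OF bounded_op_L2_S]]
  by (simp add: remainder_def[abs_def])

lemma T_in_eq_T_local: "T_in = T_local a (a + s)"
proof (intro ext)
  fix f x
  show "T_in f x = T_local a (a + s) f x"
    using mh_T_localize[of x a f] by (cases "x \<in> {-a..a}") (simp_all add: restr_in_def T_local_def)
qed

lemma compact_op_L2_T_in: "compact_op_L2 \<pi> T_in"
  unfolding T_in_eq_T_local using a_pos s_pos by (intro compact_op_L2_T_local) auto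

lemma S_A_eq: "S (A g) x = restr_out a (T_local (a + s) a) (mh_R \<pi> q g) x"
proof (cases "x \<in> {-(a+s)..a+s}")
  case True
  have "A g = (\<lambda>y. indicator {-a..a} y * mh_R \<pi> q g y)" by (simp add: restr_in_def fun_eq_iff)
  with True show ?thesis by (simp add: T_local_def restr_out_def mh_R_def split: split_indicator)
next
  case False
  have "mh_T \<pi> q (A g) x = 0"
    by (rule mh_T_eq_0_far_from_support[OF _ False]) (simp add: restr_in_def split: split_indicator_asm)
  with False show ?thesis by (simp add: T_local_def restr_in_def restr_out_def mh_R_def split: split_indicator)
qed

lemma compact_op_L2_S_A: "compact_op_L2 \<pi> (\<lambda>g. S (A g))"
proof -
  have "compact_op_L2 \<pi> (\<lambda>g. restr_out a (T_local (a + s) a) (mh_R \<pi> q g))"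
    using a_pos s_pos bounded_comp_compact_op_L2[OF bounded_op_L2_mult_indicator[of "UNIV - {-a..a}"]
        compact_op_L2_comp_bounded[OF compact_op_L2_T_local bounded_op_L2_mh_R]]
    by (simp add: restr_out_def[abs_def])
  then show ?thesis by (simp add: S_A_eq)
qed

lemma P_split: "P g x = A g x + T_in g x + S g x"
  by (simp add: mh_P_def restr_in_def restr_out_def split: split_indicator)

lemma A_S_eq_0: "A (S g) x = 0"
  by (simp add: mh_R_def restr_in_def restr_out_def split: split_indicator)

lemma A_add: "A (\<lambda>y. u y + v y) x = A u x + A v x"
  by (simp add: mh_R_def restr_in_def algebra_simps)

lemma S_add:
  assumes "square_integrable (piM \<pi>) u" "square_integrable (piM \<pi>) v"
  shows "S (\<lambda>y. u y + v y) x = S u x + S v x"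
  using mh_T_lin[OF assms, of 1 x] by (simp add: mh_R_def restr_out_def algebra_simps)

lemma remainder_1: "remainder 1 = T_in"
  by (intro ext) (simp add: remainder_def P_split)

lemma remainder_Suc:
  assumes f: "square_integrable (piM \<pi>) f"
  shows "remainder (Suc (Suc m)) f x
    = A (remainder (Suc m) f) x + T_in ((P ^^ Suc m) f) x + S (A ((A ^^ m) f)) x + S (remainder (Suc m) f) x"
proof -
  let ?u = "(P ^^ Suc m) f" and ?v = "(A ^^ Suc m) f" and ?w = "(S ^^ Suc m) f" and ?k = "remainder (Suc m) f"
  have v: "square_integrable (piM \<pi>) ?v"
    by (rule bounded_op_L2_square_integrable[OF bounded_op_L2_funpow[OF bounded_op_L2_A] f])
  have w: "square_integrable (piM \<pi>) ?w"
    by (rule bounded_op_L2_square_integrable[OF bounded_op_L2_funpow[OF bounded_op_L2_S] f])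
  have k: "square_integrable (piM \<pi>) ?k"
    by (rule bounded_op_L2_square_integrable[OF bounded_op_L2_remainder f])
  have u: "?u = (\<lambda>y. (?v y + ?k y) + ?w y)" by (auto simp: remainder_def)
  have "A ?u x = A ?v x + A ?k x"
    unfolding u A_add using A_S_eq_0[of "(S ^^ m) f" x] by simp
  moreover have "S ?u x = S ?v x + S ?k x + S ?w x"
    unfolding u by (simp only: S_add[OF square_integrable_add[OF v k] w] S_add[OF v k])
  ultimately show ?thesis
    using P_split[of ?u x] by (simp add: remainder_def)
qed

lemma compact_op_L2_remainder: "compact_op_L2 \<pi> (remainder (Suc m))"
proof (induction m)
  case 0
  show ?case using compact_op_L2_T_in by (simp add: remainder_1[unfolded One_nat_def])
next
  case (Suc m)
  have "compact_op_L2 \<pi> (\<lambda>f x. A (remainder (Suc m) f) x + T_in ((P ^^ Suc m) f) x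
      + S (A ((A ^^ m) f)) x + S (remainder (Suc m) f) x)"
    by (intro compact_op_L2_add bounded_comp_compact_op_L2[OF bounded_op_L2_A Suc.IH]
        compact_op_L2_comp_bounded[OF compact_op_L2_T_in bounded_op_L2_funpow[OF bounded_op_L2_mh_P]]
        compact_op_L2_comp_bounded[OF compact_op_L2_S_A bounded_op_L2_funpow[OF bounded_op_L2_A]]
        bounded_comp_compact_op_L2[OF bounded_op_L2_S Suc.IH])
  then show ?case
    by (rule compact_op_L2_AE_cong[OF _ bounded_op_L2_remainder]) (simp add: remainder_Suc)
qed

theorem mh_P_power_decomposition:
  assumes "n \<ge> 1"
  shows "\<exists>K. compact_op_L2 \<pi> K \<and>
    (\<forall>f. L2 \<pi> f \<longrightarrow> (AE x in piM \<pi>. (P ^^ n) f x = K f x + (A ^^ n) f x + (S ^^ n) f x))"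
proof (intro exI conjI allI impI)
  show "compact_op_L2 \<pi> (remainder n)"
    using compact_op_L2_remainder[of "n - 1"] assms by simp
qed (simp add: remainder_def)

end

theorem lemma3p2:
  fixes \<pi> :: "real \<Rightarrow> real" and q :: "real \<Rightarrow> real \<Rightarrow> real" and a :: real and n :: nat
  assumes pi_pos: "\<And>x. \<pi> x > 0"
    and pi_cont: "continuous_on UNIV \<pi>"
    and pi_int: "integrable lborel \<pi>"
    and pi_one: "(LINT x|lborel. \<pi> x) = 1"
    and q_nonneg: "\<And>x y. q x y \<ge> 0"
    and q_cont: "continuous_on UNIV (\<lambda>(x, y). q x y)"
    and q_bdd: "\<exists>M. \<forall>x y. q x y \<le> M"
    and q_int: "\<And>x. integrable lborel (q x)"
    and q_one: "\<And>x. (LINT y|lborel. q x y) = 1"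
    and q_supp: "\<exists>s>0. \<forall>x u. \<bar>u\<bar> > s \<longrightarrow> q x (x + u) = 0"
    and a_pos: "a > 0"
    and n_pos: "n \<ge> 1"
  shows "\<exists>K. compact_op_L2 \<pi> K \<and>
    (\<forall>f. L2 \<pi> f \<longrightarrow>
      (AE x in piM \<pi>.
         (mh_P \<pi> q ^^ n) f x
         = K f x + (restr_in a (mh_R \<pi> q) ^^ n) f x
           + ((\<lambda>g y. restr_out a (mh_R \<pi> q) g y + restr_out a (mh_T \<pi> q) g y) ^^ n) f x))"
proof -
  obtain Mq where "\<forall>x y. q x y \<le> Mq" using q_bdd by blast
  moreover obtain s where "s > 0" "\<forall>x u. \<bar>u\<bar> > s \<longrightarrow> q x (x + u) = 0" using q_supp by blast
  ultimately have "mh_split \<pi> q Mq s a"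
    using pi_pos pi_cont pi_int q_nonneg q_cont q_int q_one a_pos by unfold_locales auto
  then show ?thesis by (rule mh_split.mh_P_power_decomposition[OF _ n_pos])
qed

end
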